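(* Let $X$ be a $\mathbb{Z}^n$-periodic discrete metric space, $p\in(1,\infty)$, and let $A\in\mathcal{A}_p(X)$ be $\mathbb{Z}^n$-periodic, i.e. $T_\alpha A=AT_\alpha$ for every $\alpha\in\mathbb{Z}^n$. Then $\mathrm{sp}_{ess}A=\mathrm{sp}\,A$ on $l^p(X)$.
   Context: A discrete metric space is a countable set $X$ with a metric $\rho$ such that every ball is finite. It is $\mathbb{Z}^n$-periodic if $\mathbb{Z}^n$ acts on $X$ by $\rho$-isometries, $(\alpha,x)\mapsto\alpha\cdot x$ (a group action), freely, with finitely many orbits. $(T_\alpha u)(x)=u((-\alpha)\cdot x)$. A band operator on $l^p(X)$ is a linear operator with bounded generating function $k_A$ (i.e. $(Au)(x)=\sum_y k_A(x,y)u(y)$ for finitely supported $u$) vanishing whenever $\rho(x,y)>R$ for some $R$; $\mathcal{A}_p(X)$ is the closure of band operators in $\mathcal{L}(l^p(X))$. $\mathrm{sp}_{ess}A$ is the set of $\lambda$ with $A-\lambda I$ not Fredholm. *)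

theory Defs
  imports "HOL-Analysis.Analysis"
begin

text \<open>The discrete metric space X is the whole (countable) type 'a; elements of
  l^p(X) are functions 'a \<Rightarrow> complex; operators are functions on
  ('a \<Rightarrow> complex), only their behaviour on l^p(X) matters.\<close>

definition discrete_metric_space :: "('a \<Rightarrow> 'a \<Rightarrow> real) \<Rightarrow> bool" where
  "discrete_metric_space \<rho> \<longleftrightarrow>
     countable (UNIV :: 'a set) \<and>
     (\<forall>x y. \<rho> x y = 0 \<longleftrightarrow> x = y) \<and>
     (\<forall>x y. \<rho> x y = \<rho> y x) \<and>
     (\<forall>x y z. \<rho> x z \<le> \<rho> x y + \<rho> y z) \<and>
     (\<forall>x r. finite {y. \<rho> x y \<le> r})"

definition periodic_space ::
  "('a \<Rightarrow> 'a \<Rightarrow> real) \<Rightarrow> (int ^ 'n \<Rightarrow> 'a \<Rightarrow> 'a) \<Rightarrow> bool" where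
  "periodic_space \<rho> act \<longleftrightarrow>
     discrete_metric_space \<rho> \<and>
     (\<forall>x. act 0 x = x) \<and>
     (\<forall>\<alpha> \<beta> x. act (\<alpha> + \<beta>) x = act \<alpha> (act \<beta> x)) \<and>
     (\<forall>\<alpha> x y. \<rho> (act \<alpha> x) (act \<alpha> y) = \<rho> x y) \<and>
     (\<forall>\<alpha> x. act \<alpha> x = x \<longrightarrow> \<alpha> = 0) \<and>
     finite {range (\<lambda>\<alpha>. act \<alpha> x) | x. True}"

definition lp_space :: "real \<Rightarrow> ('a \<Rightarrow> complex) set" where
  "lp_space p = {u. (\<lambda>x. norm (u x) powr p) summable_on UNIV}"

definition lp_norm :: "real \<Rightarrow> ('a \<Rightarrow> complex) \<Rightarrow> real" where
  "lp_norm p u = (infsum (\<lambda>x. norm (u x) powr p) UNIV) powr (1 / p)"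

definition bounded_op :: "real \<Rightarrow> (('a \<Rightarrow> complex) \<Rightarrow> ('a \<Rightarrow> complex)) \<Rightarrow> bool" where
  "bounded_op p A \<longleftrightarrow>
     (\<forall>u \<in> lp_space p. A u \<in> lp_space p) \<and>
     (\<forall>u \<in> lp_space p. \<forall>v \<in> lp_space p. A (\<lambda>x. u x + v x) = (\<lambda>x. A u x + A v x)) \<and>
     (\<forall>u \<in> lp_space p. \<forall>c. A (\<lambda>x. c * u x) = (\<lambda>x. c * A u x)) \<and>
     (\<exists>C. \<forall>u \<in> lp_space p. lp_norm p (A u) \<le> C * lp_norm p u)"

definition op_norm :: "real \<Rightarrow> (('a \<Rightarrow> complex) \<Rightarrow> ('a \<Rightarrow> complex)) \<Rightarrow> real" where
  "op_norm p A = (SUP u \<in> {u \<in> lp_space p. lp_norm p u \<le> 1}. lp_norm p (A u))"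

definition band_op ::
  "real \<Rightarrow> ('a \<Rightarrow> 'a \<Rightarrow> real) \<Rightarrow> (('a \<Rightarrow> complex) \<Rightarrow> ('a \<Rightarrow> complex)) \<Rightarrow> bool" where
  "band_op p \<rho> A \<longleftrightarrow> bounded_op p A \<and>
     (\<exists>k :: 'a \<Rightarrow> 'a \<Rightarrow> complex. \<exists>R M.
        (\<forall>x y. norm (k x y) \<le> M) \<and>
        (\<forall>x y. \<rho> x y > R \<longrightarrow> k x y = 0) \<and>
        (\<forall>u. finite {y. u y \<noteq> 0} \<longrightarrow>
              (\<forall>x. A u x = (\<Sum>y \<in> {y. u y \<noteq> 0}. k x y * u y))))"

definition Ap_class ::
  "real \<Rightarrow> ('a \<Rightarrow> 'a \<Rightarrow> real) \<Rightarrow> (('a \<Rightarrow> complex) \<Rightarrow> ('a \<Rightarrow> complex)) \<Rightarrow> bool" where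
  "Ap_class p \<rho> A \<longleftrightarrow> bounded_op p A \<and>
     (\<forall>\<epsilon>>0. \<exists>B. band_op p \<rho> B \<and> op_norm p (\<lambda>u x. A u x - B u x) < \<epsilon>)"

definition shift :: "(int ^ 'n \<Rightarrow> 'a \<Rightarrow> 'a) \<Rightarrow> int ^ 'n \<Rightarrow> ('a \<Rightarrow> complex) \<Rightarrow> ('a \<Rightarrow> complex)" where
  "shift act \<alpha> u = (\<lambda>x. u (act (- \<alpha>) x))"

definition cspan_fun :: "('a \<Rightarrow> complex) set \<Rightarrow> ('a \<Rightarrow> complex) set" where
  "cspan_fun S = {v. \<exists>F c. finite F \<and> F \<subseteq> S \<and> v = (\<lambda>x. \<Sum>w\<in>F. c w * w x)}"

definition fredholm :: "real \<Rightarrow> (('a \<Rightarrow> complex) \<Rightarrow> ('a \<Rightarrow> complex)) \<Rightarrow> bool" where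
  "fredholm p A \<longleftrightarrow> bounded_op p A \<and>
     \<comment> \<open>finite-dimensional kernel\<close>
     (\<exists>F. finite F \<and> F \<subseteq> lp_space p \<and> {u \<in> lp_space p. A u = (\<lambda>x. 0)} \<subseteq> cspan_fun F) \<and>
     \<comment> \<open>closed range\<close>
     (\<forall>v \<in> lp_space p. (\<forall>\<epsilon>>0. \<exists>u \<in> lp_space p. lp_norm p (\<lambda>x. A u x - v x) < \<epsilon>)
          \<longrightarrow> (\<exists>u \<in> lp_space p. A u = v)) \<and>
     \<comment> \<open>finite codimension of the range\<close>
     (\<exists>F. finite F \<and> F \<subseteq> lp_space p \<and>
          (\<forall>v \<in> lp_space p. \<exists>u \<in> lp_space p. (\<lambda>x. v x - A u x) \<in> cspan_fun F))"

definition invertible_op :: "real \<Rightarrow> (('a \<Rightarrow> complex) \<Rightarrow> ('a \<Rightarrow> complex)) \<Rightarrow> bool" where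
  "invertible_op p A \<longleftrightarrow> bounded_op p A \<and>
     (\<exists>B. bounded_op p B \<and> (\<forall>u \<in> lp_space p. B (A u) = u \<and> A (B u) = u))"

definition spectrum_op :: "real \<Rightarrow> (('a \<Rightarrow> complex) \<Rightarrow> ('a \<Rightarrow> complex)) \<Rightarrow> complex set" where
  "spectrum_op p A = {z. \<not> invertible_op p (\<lambda>u x. A u x - z * u x)}"

definition ess_spectrum_op :: "real \<Rightarrow> (('a \<Rightarrow> complex) \<Rightarrow> ('a \<Rightarrow> complex)) \<Rightarrow> complex set" where
  "ess_spectrum_op p A = {z. \<not> fredholm p (\<lambda>u x. A u x - z * u x)}"

end

theory Submission
  imports Defs
begin

text \<open>An invertible operator is Fredholm, so only the converse has to be shown: a Fredholm
  operator \<open>C\<close> on \<open>l\<^sup>p(X)\<close> that commutes with the shifts is invertible.  Its kernel and its range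
  are shift-invariant subspaces, the first finite-dimensional, the second closed and of finite
  codimension.

  The key estimate concerns a shift-invariant subspace \<open>R\<close> and a vector \<open>w\<close> all of whose
  translates lie in \<open>R\<close> modulo a fixed space of dimension \<open>m\<close>.  Then for every period \<open>L\<close> some
  nontrivial combination of the \<open>m + 1\<close> translates of \<open>w\<close> by \<open>0, L, \<dots>, m L\<close> (along the diagonal
  of \<open>\<int>\<^sup>n\<close>) lies in \<open>R\<close>.  The action is free, so for \<open>L\<close> large these translates of the bulk of
  \<open>w\<close> have disjoint supports, and subtracting \<open>t\<close> times the combination, normalised so that its
  largest coefficient is \<open>1\<close>, leaves a vector of norm at most
  \<open>((1 - t)\<^sup>p + m t\<^sup>p)\<^sup>1\<^sup>/\<^sup>p \<parallel>w\<parallel> + \<epsilon>\<close>.  Since \<open>p > 1\<close> this factor is \<open>< 1\<close> for small \<open>t\<close>, so the distance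
  from \<open>w\<close> to \<open>R\<close> is a fixed fraction of \<open>\<parallel>w\<parallel>\<close>.  Hence the kernel is trivial and the range is
  everything.  The inverse of the bijection \<open>C\<close> is bounded by the Baire category argument of
  the open mapping theorem.\<close>

section \<open>Real inequalities\<close>

lemma powr_le_self: "0 \<le> (x::real) \<Longrightarrow> x \<le> 1 \<Longrightarrow> 1 \<le> p \<Longrightarrow> x powr p \<le> x"
  by (metis powr_mono' powr_one)

lemma powr_convex_combination_le:
  fixes a b l p :: real
  assumes "1 \<le> p" "0 \<le> a" "0 \<le> b" "0 \<le> l" "l \<le> 1"
  shows "(l * a + (1 - l) * b) powr p \<le> l * a powr p + (1 - l) * b powr p"
proof (cases "a > 0 \<and> b > 0")
  case True
  have "convex_on {0<..} (\<lambda>x. x powr p)" using powr_convex assms by blast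
  from convex_onD[OF this, of "1 - l" a b] True assms show ?thesis by (simp add: algebra_simps)
next
  case False
  have "(l * a) powr p \<le> l * a powr p" if "0 \<le> l" "l \<le> 1" "0 \<le> a" for l a
  proof -
    have "(l * a) powr p = l powr p * a powr p" using that by (simp add: powr_mult)
    also have "\<dots> \<le> l * a powr p" using powr_le_self[of l p] that assms(1)
      by (intro mult_right_mono) auto
    finally show ?thesis .
  qed
  moreover have "a = 0 \<or> b = 0" using False assms by auto
  ultimately show ?thesis using assms by auto
qed

lemma norm_add_powr_le_convex:
  fixes a b :: "'v::real_normed_vector"
  assumes "1 \<le> p" "0 < s" "0 < t"
  shows "norm (a + b) powr p
           \<le> (s + t) powr p * (s / (s + t) * (norm a / s) powr p + t / (s + t) * (norm b / t) powr p)"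
proof -
  define l where "l = s / (s + t)"
  have l: "0 \<le> l" "l \<le> 1" "1 - l = t / (s + t)" using assms by (auto simp: l_def field_simps)
  have "l * (norm a / s) = norm a / (s + t)" "(1 - l) * (norm b / t) = norm b / (s + t)"
    using assms by (simp add: l_def, simp add: l(3))
  then have "(s + t) * (l * (norm a / s) + (1 - l) * (norm b / t)) = norm a + norm b"
    using assms by (simp add: add_divide_distrib[symmetric])
  then have "norm (a + b) \<le> (s + t) * (l * (norm a / s) + (1 - l) * (norm b / t))"
    using norm_triangle_ineq[of a b] by simp
  then have "norm (a + b) powr p \<le> ((s + t) * (l * (norm a / s) + (1 - l) * (norm b / t))) powr p"
    using assms by (intro powr_mono2) auto
  also have "\<dots> = (s + t) powr p * (l * (norm a / s) + (1 - l) * (norm b / t)) powr p"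
    using assms l by (simp add: powr_mult)
  also have "\<dots> \<le> (s + t) powr p * (l * (norm a / s) powr p + (1 - l) * (norm b / t) powr p)"
    using assms l by (intro mult_left_mono powr_convex_combination_le) auto
  finally show ?thesis by (simp only: l(3)) (simp add: l_def)
qed

lemma contraction_weight_exists:
  fixes p :: real and m :: nat
  assumes "1 < p"
  obtains t where "0 < t" "t < 1" "(1 - t) powr p + real m * t powr p < 1"
proof -
  define s where "s = (1 / (2 * (real m + 1))) powr (1 / (p - 1))"
  define t where "t = min (1/2) s"
  have t: "0 < t" "t < 1" by (auto simp: t_def s_def)
  have "t powr (p - 1) \<le> s powr (p - 1)" using t assms by (intro powr_mono2) (auto simp: t_def)
  also have "\<dots> = 1 / (2 * (real m + 1))" using assms by (simp add: s_def powr_powr)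
  finally have "real m * (t * t powr (p - 1)) \<le> real m * (t * (1 / (2 * (real m + 1))))"
    using t by (intro mult_left_mono) auto
  also have "\<dots> = t * (real m / (2 * (real m + 1)))" by simp
  also have "\<dots> < t * 1" using t by (intro mult_strict_left_mono) (auto simp: field_simps)
  also have "t * t powr (p - 1) = t powr p"
    using t by (simp add: powr_mult_base)
  finally have "real m * t powr p < t" by simp
  moreover have "(1 - t) powr p \<le> 1 - t" using t assms by (intro powr_le_self) auto
  ultimately show thesis using t by (intro that[of t]) auto
qed

lemma powr_norm_coefficients_le:
  fixes b :: "'j \<Rightarrow> complex" and t p :: real
  assumes J: "finite J" "jm \<in> J" and b: "b jm = 1" "\<And>j. j \<in> J \<Longrightarrow> norm (b j) \<le> 1"
    and t: "0 \<le> t" "t \<le> 1" and p: "0 < p"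
  defines "k j \<equiv> (if j = jm then 1 else 0) - of_real t * b j"
  shows "\<And>j. j \<in> J \<Longrightarrow> norm (k j) \<le> 1"
    and "(\<Sum>j\<in>J. norm (k j) powr p) \<le> (1 - t) powr p + real (card J - 1) * t powr p"
proof -
  have k0: "norm (k jm) = 1 - t"
  proof -
    have "k jm = of_real (1 - t)" using b by (simp add: k_def)
    then show ?thesis using t by (simp only: norm_of_real)
  qed
  have kt: "norm (k j) \<le> t" if "j \<in> J" "j \<noteq> jm" for j
    using that t b(2)[of j] mult_left_mono[of "norm (b j)" 1 t] by (simp add: k_def norm_mult)
  show "norm (k j) \<le> 1" if "j \<in> J" for j
    using k0 kt[OF that] t by (cases "j = jm") auto
  have "(\<Sum>j\<in>J. norm (k j) powr p) = norm (k jm) powr p + (\<Sum>j\<in>J - {jm}. norm (k j) powr p)"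
    by (rule sum.remove[OF J])
  also have "(\<Sum>j\<in>J - {jm}. norm (k j) powr p) \<le> (\<Sum>j\<in>J - {jm}. t powr p)"
    using kt p by (intro sum_mono powr_mono2) auto
  also have "(\<Sum>j\<in>J - {jm}. t powr p) = real (card J - 1) * t powr p"
    using J by (simp add: card_Diff_singleton)
  finally show "(\<Sum>j\<in>J. norm (k j) powr p) \<le> (1 - t) powr p + real (card J - 1) * t powr p"
    by (simp add: k0)
qed

section \<open>Subspaces of functions and finite linear combinations\<close>

definition fun_subspace :: "('a \<Rightarrow> complex) set \<Rightarrow> bool" where
  "fun_subspace R \<longleftrightarrow>
     (\<lambda>x. 0) \<in> R \<and> (\<forall>u\<in>R. \<forall>v\<in>R. (\<lambda>x. u x + v x) \<in> R) \<and> (\<forall>u\<in>R. \<forall>c. (\<lambda>x. c * u x) \<in> R)"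

lemma fun_subspace_zero: "fun_subspace R \<Longrightarrow> (\<lambda>x. 0) \<in> R"
  by (simp add: fun_subspace_def)

lemma fun_subspace_add: "fun_subspace R \<Longrightarrow> u \<in> R \<Longrightarrow> v \<in> R \<Longrightarrow> (\<lambda>x. u x + v x) \<in> R"
  by (simp add: fun_subspace_def)

lemma fun_subspace_scale: "fun_subspace R \<Longrightarrow> u \<in> R \<Longrightarrow> (\<lambda>x. c * u x) \<in> R"
  by (simp add: fun_subspace_def)

lemma fun_subspace_lincomb:
  assumes "fun_subspace R" "finite J" "\<And>j. j \<in> J \<Longrightarrow> r j \<in> R"
  shows "(\<lambda>x. \<Sum>j\<in>J. c j * r j x) \<in> R"
  using assms(2,3)
proof (induction J rule: finite_induct)
  case (insert j J)
  then show ?case using fun_subspace_add[OF assms(1) fun_subspace_scale[OF assms(1)]] by simp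
qed (simp add: fun_subspace_zero[OF assms(1)])

lemma cspan_fun_zero: "(\<lambda>x. 0) \<in> cspan_fun F"
  unfolding cspan_fun_def by (intro CollectI exI[of _ "{}"]) auto

lemma homogeneous_system_nontrivial_solution:
  fixes a :: "'j \<Rightarrow> 'f \<Rightarrow> 'k::field"
  assumes "finite F" "finite J" "card F < card J"
  shows "\<exists>c. (\<exists>j\<in>J. c j \<noteq> 0) \<and> (\<forall>f\<in>F. (\<Sum>j\<in>J. c j * a j f) = 0)"
  using assms
proof (induction F arbitrary: J a rule: finite_induct)
  case empty
  then obtain j where "j \<in> J" by (metis card.empty ex_in_conv less_irrefl)
  then show ?case by (intro exI[of _ "\<lambda>_. 1"]) auto
next
  case (insert f0 F)
  show ?case
  proof (cases "\<forall>j\<in>J. a j f0 = 0")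
    case True
    have "card F < card J" using insert by simp
    then obtain c where c: "\<exists>j\<in>J. c j \<noteq> 0" "\<forall>f\<in>F. (\<Sum>j\<in>J. c j * a j f) = 0"
      using insert.IH[of J a] insert by blast
    then show ?thesis using True by (intro exI[of _ c]) auto
  next
    case False
    then obtain j1 where j1: "j1 \<in> J" "a j1 f0 \<noteq> 0" by blast
    \<comment> \<open>eliminate the unknown \<open>c j1\<close> with the equation indexed by \<open>f0\<close>\<close>
    define J' where "J' = J - {j1}"
    define a' where "a' j f = a j f - (a j f0 / a j1 f0) * a j1 f" for j f
    have "card J' = card J - 1" using j1 insert by (simp add: J'_def)
    then have "card F < card J'" using insert by simp
    then obtain c' where c': "\<exists>j\<in>J'. c' j \<noteq> 0" "\<forall>f\<in>F. (\<Sum>j\<in>J'. c' j * a' j f) = 0"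
    proof -
      have "finite J'" using insert by (simp add: J'_def)
      then show ?thesis using insert.IH[of J' a'] \<open>card F < card J'\<close> that by blast
    qed
    define c where "c j = (if j = j1 then - (\<Sum>j\<in>J'. c' j * a j f0) / a j1 f0 else c' j)" for j
    have sumJ: "(\<Sum>j\<in>J. c j * a j f) = c j1 * a j1 f + (\<Sum>j\<in>J'. c' j * a j f)" for f
    proof -
      have "(\<Sum>j\<in>J. c j * a j f) = c j1 * a j1 f + (\<Sum>j\<in>J'. c j * a j f)"
        unfolding J'_def by (rule sum.remove[OF insert.prems(1) j1(1)])
      also have "(\<Sum>j\<in>J'. c j * a j f) = (\<Sum>j\<in>J'. c' j * a j f)"
        by (rule sum.cong) (auto simp: c_def J'_def)
      finally show ?thesis .
    qed
    have z0: "(\<Sum>j\<in>J. c j * a j f0) = 0"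
      unfolding sumJ using j1 by (simp add: c_def)
    have zF: "(\<Sum>j\<in>J. c j * a j f) = 0" if "f \<in> F" for f
    proof -
      have "(\<Sum>j\<in>J'. c' j * a' j f) = (\<Sum>j\<in>J'. c' j * a j f) - (\<Sum>j\<in>J'. c' j * a j f0) / a j1 f0 * a j1 f"
        by (simp add: a'_def algebra_simps sum_subtractf sum_distrib_left sum_divide_distrib sum_distrib_right)
      then have "(\<Sum>j\<in>J'. c' j * a j f) - (\<Sum>j\<in>J'. c' j * a j f0) / a j1 f0 * a j1 f = 0"
        using c'(2) that by simp
      then show ?thesis unfolding sumJ using j1 by (simp add: c_def algebra_simps)
    qed
    have "\<exists>j\<in>J. c j \<noteq> 0" using c'(1) by (auto simp: c_def J'_def)
    then show ?thesis using z0 zF by (intro exI[of _ c]) auto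
  qed
qed

lemma nontrivial_lincomb_in_subspace:
  fixes w :: "'j \<Rightarrow> ('a \<Rightarrow> complex)"
  assumes R: "fun_subspace R" and F: "finite F" and J: "finite J" and card: "card F < card J"
    and w: "\<And>j. j \<in> J \<Longrightarrow> \<exists>r\<in>R. (\<lambda>x. w j x - r x) \<in> cspan_fun F"
  obtains c where "\<exists>j\<in>J. c j \<noteq> 0" "(\<lambda>x. \<Sum>j\<in>J. c j * w j x) \<in> R"
proof -
  have "\<exists>r a. r \<in> R \<and> (\<forall>x. w j x - r x = (\<Sum>g\<in>F. a g * g x))" if j: "j \<in> J" for j
  proof -
    obtain r G co where r: "r \<in> R" and G: "finite G" "G \<subseteq> F"
      and eq: "(\<lambda>x. w j x - r x) = (\<lambda>x. \<Sum>g\<in>G. co g * g x)"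
      using w[OF j] by (auto simp: cspan_fun_def)
    define a where "a g = (if g \<in> G then co g else 0)" for g
    have "w j x - r x = (\<Sum>g\<in>F. a g * g x)" for x
    proof -
      have "w j x - r x = (\<Sum>g\<in>G. a g * g x)" using eq by (simp add: a_def fun_eq_iff)
      also have "\<dots> = (\<Sum>g\<in>F. a g * g x)"
        by (rule sum.mono_neutral_left) (use F G in \<open>auto simp: a_def\<close>)
      finally show ?thesis .
    qed
    then show ?thesis using r by blast
  qed
  then obtain r a where r: "\<And>j. j \<in> J \<Longrightarrow> r j \<in> R"
    and ra: "\<And>j x. j \<in> J \<Longrightarrow> w j x - r j x = (\<Sum>g\<in>F. a j g * g x)"
    by metis
  obtain c where c: "\<exists>j\<in>J. c j \<noteq> 0" "\<forall>g\<in>F. (\<Sum>j\<in>J. c j * a j g) = 0"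
    using homogeneous_system_nontrivial_solution[OF F J card, of a] by blast
  have "(\<Sum>j\<in>J. c j * w j x) = (\<Sum>j\<in>J. c j * r j x)" for x
  proof -
    have "(\<Sum>j\<in>J. c j * w j x) = (\<Sum>j\<in>J. c j * r j x) + (\<Sum>j\<in>J. c j * (w j x - r j x))"
      by (simp add: algebra_simps sum.distrib[symmetric])
    also have "(\<Sum>j\<in>J. c j * (w j x - r j x)) = (\<Sum>g\<in>F. (\<Sum>j\<in>J. c j * a j g) * g x)"
      using ra by (simp add: sum_distrib_left sum_distrib_right mult.assoc sum.swap[of _ J])
    also have "\<dots> = 0" using c(2) by simp
    finally show ?thesis by simp
  qed
  then have "(\<lambda>x. \<Sum>j\<in>J. c j * w j x) \<in> R"
    using fun_subspace_lincomb[OF R J r] by simp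
  with c(1) show thesis by (rule that)
qed

section \<open>The space \<open>l\<^sup>p\<close>\<close>

locale lp_exponent =
  fixes p :: real
  assumes one_less_p: "1 < p"
begin

abbreviation X :: "('a \<Rightarrow> complex) set" where
  "X \<equiv> lp_space p"
abbreviation S :: "('a \<Rightarrow> complex) \<Rightarrow> real" where
  "S u \<equiv> infsum (\<lambda>x. norm (u x) powr p) UNIV"
abbreviation N :: "('a \<Rightarrow> complex) \<Rightarrow> real" where
  "N u \<equiv> lp_norm p u"

abbreviation lp_dist :: "('a \<Rightarrow> complex) \<Rightarrow> ('a \<Rightarrow> complex) \<Rightarrow> real" where
  "lp_dist u v \<equiv> N (\<lambda>x. u x - v x)"

lemma p_pos: "0 < p"
  using one_less_p by simp

lemma mem_X_iff: "u \<in> X \<longleftrightarrow> (\<lambda>x. norm (u x) powr p) summable_on UNIV"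
  by (simp add: lp_space_def)

lemma S_nonneg: "0 \<le> S u"
  by (intro infsum_nonneg) simp

lemma N_nonneg: "0 \<le> N u"
  by (simp add: lp_norm_def)

lemma N_powr_p: "N u powr p = S u"
  using p_pos S_nonneg[of u] by (simp add: lp_norm_def powr_powr)

lemma N_eq_S_powr: "N u = S u powr (1 / p)"
  by (simp add: lp_norm_def)

lemma N_le_iff_S_le:
  assumes "0 \<le> c"
  shows "N u \<le> c \<longleftrightarrow> S u \<le> c powr p"
proof -
  have "N u \<le> c \<longleftrightarrow> N u powr p \<le> c powr p"
  proof
    show "N u \<le> c \<Longrightarrow> N u powr p \<le> c powr p"
      using p_pos N_nonneg[of u] by (simp add: powr_mono2)
    show "N u powr p \<le> c powr p \<Longrightarrow> N u \<le> c"
      using assms p_pos powr_less_mono2[of p c "N u"] by (meson not_le)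
  qed
  then show ?thesis by (simp add: N_powr_p)
qed

lemma N_less_iff_S_less:
  assumes "0 \<le> c"
  shows "N u < c \<longleftrightarrow> S u < c powr p"
proof -
  have "N u < c \<longleftrightarrow> N u powr p < c powr p"
  proof
    show "N u < c \<Longrightarrow> N u powr p < c powr p"
      using p_pos N_nonneg[of u] by (simp add: powr_less_mono2)
    show "N u powr p < c powr p \<Longrightarrow> N u < c"
      using assms p_pos powr_mono2[of p c "N u"] by (meson less_imp_le not_le)
  qed
  then show ?thesis by (simp add: N_powr_p)
qed

lemma norm_le_N:
  assumes "u \<in> X"
  shows "norm (u x) \<le> N u"
proof -
  have "infsum (\<lambda>x. norm (u x) powr p) {x} \<le> S u"
    using assms by (intro infsum_mono_neutral) (auto simp: mem_X_iff)
  then have "norm (u x) powr p \<le> N u powr p"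
    by (simp add: N_powr_p)
  then show ?thesis
    using p_pos N_nonneg[of u] powr_less_mono2[of p "N u" "norm (u x)"] by (meson not_le)
qed

lemma N_eq_0D: "u \<in> X \<Longrightarrow> N u = 0 \<Longrightarrow> u = (\<lambda>x. 0)"
  using norm_le_N[of u] by (auto simp: fun_eq_iff)

lemma N_zero [simp]: "N (\<lambda>x. 0) = 0"
  using p_pos by (simp add: lp_norm_def)

lemma X_zero [simp]: "(\<lambda>x. 0) \<in> X"
  using p_pos by (simp add: mem_X_iff)

lemma X_scale:
  assumes "u \<in> X"
  shows "(\<lambda>x. c * u x) \<in> X"
proof -
  have "(\<lambda>x. norm c powr p * norm (u x) powr p) summable_on UNIV"
    using assms by (intro summable_on_cmult_right) (simp add: mem_X_iff)
  then show ?thesis by (simp add: mem_X_iff norm_mult powr_mult)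
qed

lemma S_scale:
  assumes "u \<in> X"
  shows "S (\<lambda>x. c * u x) = norm c powr p * S u"
proof -
  have "S (\<lambda>x. c * u x) = infsum (\<lambda>x. norm c powr p * norm (u x) powr p) UNIV"
    by (simp add: norm_mult powr_mult)
  also have "\<dots> = norm c powr p * S u"
    using assms by (intro infsum_cmult_right) (simp add: mem_X_iff)
  finally show ?thesis .
qed

lemma N_scale: "u \<in> X \<Longrightarrow> N (\<lambda>x. c * u x) = norm c * N u"
  using p_pos S_nonneg[of u] by (simp add: S_scale N_eq_S_powr powr_mult powr_powr)

lemma N_minus: "N (\<lambda>x. - u x) = N u"
  by (simp add: lp_norm_def)

lemma N_minus_commute: "N (\<lambda>x. u x - v x) = N (\<lambda>x. v x - u x)"
  by (simp add: lp_norm_def norm_minus_commute)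

lemma minkowski:
  assumes u: "u \<in> X" and v: "v \<in> X"
  shows "(\<lambda>x. u x + v x) \<in> X \<and> N (\<lambda>x. u x + v x) \<le> N u + N v"
proof (cases "N u = 0 \<or> N v = 0")
  case True
  then have "u = (\<lambda>x. 0) \<or> v = (\<lambda>x. 0)" using N_eq_0D u v by blast
  then show ?thesis using u v by auto
next
  case False
  define s where "s = N u"
  define t where "t = N v"
  have s: "s > 0" and t: "t > 0" using False N_nonneg s_def t_def by (metis order_le_less)+
  \<comment> \<open>sum the pointwise convexity bound with weights \<open>N u\<close> and \<open>N v\<close>\<close>
  define g where
    "g x = (s + t) powr p * (s / (s + t) * (norm (u x) / s) powr p + t / (s + t) * (norm (v x) / t) powr p)"
    for x
  have pt: "norm (u x + v x) powr p \<le> g x" for x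
    unfolding g_def using one_less_p s t by (intro norm_add_powr_le_convex) auto
  have g_eq: "g = (\<lambda>x. (s + t) powr p * (s / (s + t) / s powr p * norm (u x) powr p
                                      + t / (s + t) / t powr p * norm (v x) powr p))"
    using s t by (simp add: g_def fun_eq_iff powr_divide)
  have su: "(\<lambda>x. s / (s + t) / s powr p * norm (u x) powr p) summable_on UNIV"
    using u unfolding mem_X_iff by (rule summable_on_cmult_right)
  have sv: "(\<lambda>x. t / (s + t) / t powr p * norm (v x) powr p) summable_on UNIV"
    using v unfolding mem_X_iff by (rule summable_on_cmult_right)
  have gs: "g summable_on UNIV"
    unfolding g_eq by (rule summable_on_cmult_right, rule summable_on_add[OF su sv])
  have mem: "(\<lambda>x. u x + v x) \<in> X"
    unfolding mem_X_iff by (rule summable_on_comparison_test[OF gs]) (auto intro: pt)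
  have "S (\<lambda>x. u x + v x) \<le> infsum g UNIV"
    using mem gs pt by (intro infsum_mono) (auto simp: mem_X_iff)
  also have "infsum g UNIV = (s + t) powr p * (s / (s + t) / s powr p * S u + t / (s + t) / t powr p * S v)"
    unfolding g_eq by (simp only: infsum_cmult_right' infsum_add[OF su sv])
  also have "\<dots> = (s + t) powr p"
  proof -
    have "S u = s powr p" "S v = t powr p" by (simp_all add: s_def t_def N_powr_p)
    then show ?thesis using s t by (simp add: add_divide_distrib[symmetric])
  qed
  finally show ?thesis
    using mem s t by (simp add: N_le_iff_S_le s_def t_def)
qed

lemma X_add: "u \<in> X \<Longrightarrow> v \<in> X \<Longrightarrow> (\<lambda>x. u x + v x) \<in> X"
  using minkowski by blast

lemma N_add_le: "u \<in> X \<Longrightarrow> v \<in> X \<Longrightarrow> N (\<lambda>x. u x + v x) \<le> N u + N v"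
  using minkowski by blast

lemma X_diff: "u \<in> X \<Longrightarrow> v \<in> X \<Longrightarrow> (\<lambda>x. u x - v x) \<in> X"
  using X_add[of u "\<lambda>x. (-1) * v x"] X_scale[of v "-1"] by simp

lemma N_diff_le: "u \<in> X \<Longrightarrow> v \<in> X \<Longrightarrow> N (\<lambda>x. u x - v x) \<le> N u + N v"
  using N_add_le[of u "\<lambda>x. (-1) * v x"] X_scale[of v "-1"] N_scale[of v "-1"] by simp

lemma N_triangle:
  "u \<in> X \<Longrightarrow> v \<in> X \<Longrightarrow> w \<in> X \<Longrightarrow> N (\<lambda>x. u x - w x) \<le> N (\<lambda>x. u x - v x) + N (\<lambda>x. v x - w x)"
  using N_add_le[OF X_diff X_diff, of u v v w] by simp

lemma X_lincomb:
  assumes "finite J" "\<And>j. j \<in> J \<Longrightarrow> g j \<in> X"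
  shows "(\<lambda>x. \<Sum>j\<in>J. c j * g j x) \<in> X \<and> N (\<lambda>x. \<Sum>j\<in>J. c j * g j x) \<le> (\<Sum>j\<in>J. norm (c j) * N (g j))"
  using assms
proof (induction J rule: finite_induct)
  case (insert j J)
  have a: "(\<lambda>x. c j * g j x) \<in> X" using insert X_scale by auto
  have b: "(\<lambda>x. \<Sum>j\<in>J. c j * g j x) \<in> X" using insert by auto
  have "N (\<lambda>x. c j * g j x + (\<Sum>j\<in>J. c j * g j x)) \<le> N (\<lambda>x. c j * g j x) + N (\<lambda>x. \<Sum>j\<in>J. c j * g j x)"
    using N_add_le[OF a b] by simp
  also have "\<dots> \<le> norm (c j) * N (g j) + (\<Sum>j\<in>J. norm (c j) * N (g j))"
    using insert N_scale[of "g j" "c j"] by simp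
  finally show ?case using insert X_add[OF a b] by simp
qed simp

lemma X_truncate:
  assumes "w \<in> X"
  shows "(\<lambda>x. if x \<in> G then w x else 0) \<in> X" "N (\<lambda>x. if x \<in> G then w x else 0) \<le> N w"
proof -
  have sw: "(\<lambda>x. norm (w x) powr p) summable_on UNIV" using assms by (simp add: mem_X_iff)
  have eq: "(\<lambda>x. norm (if x \<in> G then w x else 0) powr p) = (\<lambda>x. if x \<in> G then norm (w x) powr p else 0)"
    using p_pos by (auto simp: fun_eq_iff)
  show "(\<lambda>x. if x \<in> G then w x else 0) \<in> X"
    unfolding mem_X_iff eq by (rule summable_on_comparison_test[OF sw]) auto
  then have "S (\<lambda>x. if x \<in> G then w x else 0) \<le> S w"
    using sw by (intro infsum_mono) (auto simp: mem_X_iff)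
  then show "N (\<lambda>x. if x \<in> G then w x else 0) \<le> N w"
    using N_nonneg[of w] by (simp add: N_le_iff_S_le N_powr_p)
qed

lemma finite_truncation_approx:
  assumes w: "w \<in> X" and e: "e > 0"
  obtains G where "finite G" "N (\<lambda>x. w x - (if x \<in> G then w x else 0)) < e"
proof -
  define f where "f x = norm (w x) powr p" for x
  have fs: "f summable_on UNIV" using w unfolding mem_X_iff f_def .
  have ep: "e powr p > 0" using e by simp
  obtain G where G: "finite G" "dist (sum f G) (infsum f UNIV) \<le> e powr p / 2"
    using infsum_finite_approximation[OF fs, of "e powr p / 2"] ep by auto
  define t where "t x = (if x \<in> G then 0 else f x)" for x
  have "infsum t UNIV = infsum f (UNIV - G)"
    by (rule infsum_cong_neutral) (auto simp: t_def)
  also have "\<dots> = infsum f UNIV - sum f G"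
    using fs G(1) by (simp add: infsum_Diff)
  finally have "infsum t UNIV = infsum f UNIV - sum f G" .
  moreover have "sum f G \<le> infsum f UNIV"
    using G(1) fs by (intro finite_sum_le_infsum) (auto simp: f_def)
  ultimately have tail: "infsum t UNIV \<le> e powr p / 2" using G(2) by (simp add: dist_real_def)
  have "(\<lambda>x. norm (w x - (if x \<in> G then w x else 0)) powr p) = t"
    using p_pos by (auto simp: t_def f_def fun_eq_iff)
  then have "S (\<lambda>x. w x - (if x \<in> G then w x else 0)) < e powr p" using tail ep by (simp only:)
  then have "N (\<lambda>x. w x - (if x \<in> G then w x else 0)) < e"
    using e by (simp add: N_less_iff_S_less)
  with G(1) show thesis by (rule that)
qed

lemma summable_on_sum_fun:
  fixes g :: "'j \<Rightarrow> 'b \<Rightarrow> real"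
  assumes "finite J" "\<And>j. j \<in> J \<Longrightarrow> g j summable_on A"
  shows "(\<lambda>x. \<Sum>j\<in>J. g j x) summable_on A"
  using assms by (induction J rule: finite_induct) (auto intro: summable_on_add)

lemma S_sum_disjoint_supports:
  assumes J: "finite J" and g: "\<And>j. j \<in> J \<Longrightarrow> g j \<in> X"
    and disj: "\<And>x i j. i \<in> J \<Longrightarrow> j \<in> J \<Longrightarrow> i \<noteq> j \<Longrightarrow> g i x = 0 \<or> g j x = 0"
  shows "S (\<lambda>x. \<Sum>j\<in>J. g j x) = (\<Sum>j\<in>J. S (g j))"
proof -
  have pt: "norm (\<Sum>j\<in>J. g j x) powr p = (\<Sum>j\<in>J. norm (g j x) powr p)" for x
  proof (cases "\<exists>j\<in>J. g j x \<noteq> 0")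
    case True
    then obtain j0 where j0: "j0 \<in> J" "g j0 x \<noteq> 0" by blast
    have z: "g j x = 0" if "j \<in> J" "j \<noteq> j0" for j using disj[of j j0 x] j0 that by auto
    have "(\<Sum>j\<in>J. g j x) = g j0 x" "(\<Sum>j\<in>J. norm (g j x) powr p) = norm (g j0 x) powr p"
      using J j0 z p_pos by (simp_all add: sum.remove[OF J j0(1)] sum.neutral)
    then show ?thesis by simp
  qed (use p_pos in simp)
  have "S (\<lambda>x. \<Sum>j\<in>J. g j x) = infsum (\<lambda>x. \<Sum>j\<in>J. norm (g j x) powr p) UNIV"
    by (simp add: pt)
  also have "\<dots> = (\<Sum>j\<in>J. S (g j))"
    using J g
  proof (induction J rule: finite_induct)
    case (insert j J)
    have s1: "(\<lambda>x. norm (g j x) powr p) summable_on UNIV" using insert by (simp add: mem_X_iff)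
    have s2: "(\<lambda>x. \<Sum>j\<in>J. norm (g j x) powr p) summable_on UNIV"
      using insert by (intro summable_on_sum_fun) (auto simp: mem_X_iff)
    show ?case using insert infsum_add[OF s1 s2] by simp
  qed simp
  finally show ?thesis .
qed

lemma pointwise_limit_N_le:
  fixes \<sigma> :: "nat \<Rightarrow> 'a \<Rightarrow> complex"
  assumes \<sigma>: "\<And>k. \<sigma> k \<in> X" and lim: "\<And>x. (\<lambda>l. \<sigma> l x) \<longlonglongrightarrow> s x"
    and close: "\<And>l. l \<ge> K \<Longrightarrow> N (\<lambda>x. \<sigma> k x - \<sigma> l x) \<le> e" and e: "0 \<le> e"
  shows "(\<lambda>x. \<sigma> k x - s x) \<in> X" "N (\<lambda>x. \<sigma> k x - s x) \<le> e"
proof -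
  define f where "f x = norm (\<sigma> k x - s x) powr p" for x
  have fin: "sum f G \<le> e powr p" if G: "finite G" for G
  proof -
    have "(\<lambda>l. \<Sum>x\<in>G. norm (\<sigma> k x - \<sigma> l x) powr p) \<longlonglongrightarrow> sum f G"
      unfolding f_def using p_pos by (intro tendsto_sum tendsto_powr' tendsto_norm tendsto_diff tendsto_const lim) auto
    moreover have "(\<Sum>x\<in>G. norm (\<sigma> k x - \<sigma> l x) powr p) \<le> e powr p" if "K \<le> l" for l
    proof -
      have "(\<Sum>x\<in>G. norm (\<sigma> k x - \<sigma> l x) powr p) \<le> S (\<lambda>x. \<sigma> k x - \<sigma> l x)"
        using G X_diff[OF \<sigma> \<sigma>, of k l] by (intro finite_sum_le_infsum) (auto simp: mem_X_iff)
      then show ?thesis using close[OF that] e by (simp add: N_le_iff_S_le)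
    qed
    then have "\<forall>\<^sub>F l in sequentially. (\<Sum>x\<in>G. norm (\<sigma> k x - \<sigma> l x) powr p) \<le> e powr p"
      by (rule eventually_sequentiallyI)
    ultimately show ?thesis by (rule tendsto_upperbound) simp
  qed
  have fs: "f summable_on UNIV"
    by (rule nonneg_bdd_above_summable_on) (use fin in \<open>auto simp: f_def intro!: bdd_aboveI\<close>)
  then show "(\<lambda>x. \<sigma> k x - s x) \<in> X" by (simp add: mem_X_iff f_def[abs_def])
  have "infsum f UNIV \<le> e powr p" using fs fin by (rule infsum_le_finite_sums)
  then show "N (\<lambda>x. \<sigma> k x - s x) \<le> e" using e by (simp add: N_le_iff_S_le f_def[abs_def])
qed

lemma X_complete:
  fixes \<sigma> :: "nat \<Rightarrow> 'a \<Rightarrow> complex"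
  assumes \<sigma>: "\<And>k. \<sigma> k \<in> X"
    and cauchy: "\<And>e. e > 0 \<Longrightarrow> \<exists>K. \<forall>k\<ge>K. \<forall>l\<ge>K. N (\<lambda>x. \<sigma> k x - \<sigma> l x) < e"
  obtains s where "s \<in> X" "\<And>e. e > 0 \<Longrightarrow> \<exists>K. \<forall>k\<ge>K. N (\<lambda>x. \<sigma> k x - s x) \<le> e"
proof -
  have "Cauchy (\<lambda>k. \<sigma> k x)" for x
  proof (rule metric_CauchyI)
    fix e :: real assume "e > 0"
    then obtain K where "\<forall>k\<ge>K. \<forall>l\<ge>K. N (\<lambda>x. \<sigma> k x - \<sigma> l x) < e" using cauchy by blast
    moreover have "dist (\<sigma> k x) (\<sigma> l x) \<le> N (\<lambda>x. \<sigma> k x - \<sigma> l x)" for k l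
      using norm_le_N[OF X_diff[OF \<sigma>[of k] \<sigma>[of l]], of x] by (simp add: dist_norm)
    ultimately show "\<exists>M. \<forall>m\<ge>M. \<forall>n\<ge>M. dist (\<sigma> m x) (\<sigma> n x) < e"
      by (meson order_le_less_trans)
  qed
  then have "convergent (\<lambda>k. \<sigma> k x)" for x by (rule Cauchy_convergent)
  then obtain s where lim: "\<And>x. (\<lambda>k. \<sigma> k x) \<longlonglongrightarrow> s x"
    unfolding convergent_def by metis
  have tail: "(\<lambda>x. \<sigma> k x - s x) \<in> X \<and> N (\<lambda>x. \<sigma> k x - s x) \<le> e"
    if "e > 0" "\<forall>k\<ge>K. \<forall>l\<ge>K. N (\<lambda>x. \<sigma> k x - \<sigma> l x) < e" "k \<ge> K" for e K k
    using pointwise_limit_N_le[OF \<sigma> lim, of K k e] that by (simp add: less_imp_le)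
  obtain K1 where "\<forall>k\<ge>K1. \<forall>l\<ge>K1. N (\<lambda>x. \<sigma> k x - \<sigma> l x) < 1" using cauchy[of 1] by auto
  then have "(\<lambda>x. \<sigma> K1 x - s x) \<in> X" using tail[of 1 K1 K1] by auto
  then have "(\<lambda>x. \<sigma> K1 x - (\<sigma> K1 x - s x)) \<in> X" using X_diff \<sigma> by blast
  then have "s \<in> X" by simp
  moreover have "\<exists>K. \<forall>k\<ge>K. N (\<lambda>x. \<sigma> k x - s x) \<le> e" if "e > 0" for e
  proof -
    obtain K where "\<forall>k\<ge>K. \<forall>l\<ge>K. N (\<lambda>x. \<sigma> k x - \<sigma> l x) < e" using cauchy \<open>e > 0\<close> by blast
    then show ?thesis using tail \<open>e > 0\<close> by blast
  qed
  ultimately show thesis by (rule that)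
qed

lemma lp_metric: "Metric_space X lp_dist"
proof
  show "0 \<le> N (\<lambda>x. u x - v x)" for u v by (rule N_nonneg)
  show "N (\<lambda>x. u x - v x) = N (\<lambda>x. v x - u x)" for u v by (rule N_minus_commute)
  show "N (\<lambda>x. u x - v x) = 0 \<longleftrightarrow> u = v" if "u \<in> X" "v \<in> X" for u v
    using N_eq_0D[OF X_diff[OF that]] by (auto simp: fun_eq_iff)
  show "N (\<lambda>x. u x - w x) \<le> N (\<lambda>x. u x - v x) + N (\<lambda>x. v x - w x)" if "u \<in> X" "v \<in> X" "w \<in> X"
    for u v w using N_triangle[OF that] .
qed

lemma lp_mcomplete: "Metric_space.mcomplete X lp_dist"
proof -
  interpret lp: Metric_space X lp_dist by (rule lp_metric)
  show ?thesis
    unfolding lp.mcomplete_def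
  proof (intro allI impI)
    fix \<sigma> assume "lp.MCauchy \<sigma>"
    then have \<sigma>: "\<And>k. \<sigma> k \<in> X"
      and cauchy: "\<And>e. e > 0 \<Longrightarrow> \<exists>K. \<forall>k\<ge>K. \<forall>l\<ge>K. N (\<lambda>x. \<sigma> k x - \<sigma> l x) < e"
      unfolding lp.MCauchy_def by auto
    obtain s where s: "s \<in> X" "\<And>e. e > 0 \<Longrightarrow> \<exists>K. \<forall>k\<ge>K. N (\<lambda>x. \<sigma> k x - s x) \<le> e"
      using X_complete[OF \<sigma> cauchy] by blast
    have "limitin lp.mtopology \<sigma> s sequentially"
      unfolding lp.limitin_metric
    proof (intro conjI allI impI)
      fix e :: real assume "e > 0"
      then obtain K where "\<forall>k\<ge>K. N (\<lambda>x. \<sigma> k x - s x) \<le> e / 2" using s(2) half_gt_zero by blast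
      then show "\<forall>\<^sub>F n in sequentially. \<sigma> n \<in> X \<and> N (\<lambda>x. \<sigma> n x - s x) < e"
        using \<sigma> \<open>e > 0\<close> by (intro eventually_sequentiallyI[of K]) force
    qed (rule s(1))
    then show "\<exists>s. limitin lp.mtopology \<sigma> s sequentially" by blast
  qed
qed

section \<open>Bounded operators and the open mapping argument\<close>

lemma bounded_op_mem: "bounded_op p C \<Longrightarrow> u \<in> X \<Longrightarrow> C u \<in> X"
  by (simp add: bounded_op_def)

lemma bounded_op_add:
  "bounded_op p C \<Longrightarrow> u \<in> X \<Longrightarrow> v \<in> X \<Longrightarrow> C (\<lambda>x. u x + v x) = (\<lambda>x. C u x + C v x)"
  by (simp add: bounded_op_def)

lemma bounded_op_scale: "bounded_op p C \<Longrightarrow> u \<in> X \<Longrightarrow> C (\<lambda>x. c * u x) = (\<lambda>x. c * C u x)"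
  by (simp add: bounded_op_def)

lemma bounded_op_zero: "bounded_op p C \<Longrightarrow> C (\<lambda>x. 0) = (\<lambda>x. 0)"
  using bounded_op_scale[of C "\<lambda>x. 0" 0] by simp

lemma bounded_op_diff:
  "bounded_op p C \<Longrightarrow> u \<in> X \<Longrightarrow> v \<in> X \<Longrightarrow> C (\<lambda>x. u x - v x) = (\<lambda>x. C u x - C v x)"
  using bounded_op_add[of C u "\<lambda>x. (-1) * v x"] bounded_op_scale[of C v "-1"] X_scale[of v "-1"]
  by simp

lemma bounded_op_bound:
  assumes "bounded_op p C"
  obtains B where "B \<ge> 0" "\<And>u. u \<in> X \<Longrightarrow> N (C u) \<le> B * N u"
proof -
  obtain B where B: "\<forall>u\<in>X. N (C u) \<le> B * N u" using assms by (auto simp: bounded_op_def)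
  have "N (C u) \<le> max B 0 * N u" if "u \<in> X" for u
    using B that N_nonneg[of u] by (smt (verit) mult_right_mono)
  then show thesis by (intro that[of "max B 0"]) auto
qed

definition approx_image_ball :: "(('a \<Rightarrow> complex) \<Rightarrow> ('a \<Rightarrow> complex)) \<Rightarrow> real \<Rightarrow> ('a \<Rightarrow> complex) set" where
  "approx_image_ball C c = {v \<in> X. \<forall>e>0. \<exists>u\<in>X. N u \<le> c \<and> N (\<lambda>x. C u x - v x) < e}"

lemma closedin_approx_image_ball:
  fixes C :: "('a \<Rightarrow> complex) \<Rightarrow> ('a \<Rightarrow> complex)"
  assumes C: "bounded_op p C"
  shows "closedin (Metric_space.mtopology X lp_dist) (approx_image_ball C c)"
proof -
  interpret lp: Metric_space X lp_dist by (rule lp_metric)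
  show ?thesis
    unfolding lp.closedin_metric
  proof (intro conjI allI impI)
    show "approx_image_ball C c \<subseteq> X" by (auto simp: approx_image_ball_def)
    fix v assume v: "v \<in> X - approx_image_ball C c"
    then obtain e0 where e0: "e0 > 0" "\<And>u. u \<in> X \<Longrightarrow> N u \<le> c \<Longrightarrow> \<not> N (\<lambda>x. C u x - v x) < e0"
      by (auto simp: approx_image_ball_def)
    have "y \<notin> approx_image_ball C c" if y: "y \<in> lp.mball v (e0 / 2)" for y
    proof
      assume "y \<in> approx_image_ball C c"
      then obtain u where u: "u \<in> X" "N u \<le> c" "N (\<lambda>x. C u x - y x) < e0 / 2"
        using e0(1) by (auto simp: approx_image_ball_def dest!: spec[of _ "e0 / 2"])
      have "N (\<lambda>x. C u x - v x) \<le> N (\<lambda>x. C u x - y x) + N (\<lambda>x. y x - v x)"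
        using N_triangle[OF bounded_op_mem[OF C u(1)]] v y by auto
      also have "\<dots> < e0" using u(3) y N_minus_commute[of y v] by simp
      finally show False using e0(2)[OF u(1,2)] by simp
    qed
    then have "disjnt (approx_image_ball C c) (lp.mball v (e0 / 2))"
      by (auto simp: disjnt_def)
    then show "\<exists>r>0. disjnt (approx_image_ball C c) (lp.mball v r)"
      using e0(1) half_gt_zero by blast
  qed
qed

text \<open>The Baire category step of the open mapping theorem.\<close>
lemma approx_image_ball_contains_ball:
  fixes C :: "('a \<Rightarrow> complex) \<Rightarrow> ('a \<Rightarrow> complex)"
  assumes C: "bounded_op p C" and surj: "\<And>v. v \<in> X \<Longrightarrow> \<exists>u\<in>X. C u = v"
  obtains k :: nat and v0 r where "r > 0" "v0 \<in> X"
    "Metric_space.mball X lp_dist v0 r \<subseteq> approx_image_ball C k"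
proof -
  interpret lp: Metric_space X lp_dist by (rule lp_metric)
  have cover: "(\<Union>k::nat. approx_image_ball C k) = X"
  proof
    show "X \<subseteq> (\<Union>k::nat. approx_image_ball C k)"
    proof
      fix v :: "'a \<Rightarrow> complex" assume v: "v \<in> X"
      then obtain u where u: "u \<in> X" "C u = v" using surj by blast
      obtain k :: nat where "N u \<le> k" using real_arch_simple by blast
      then have "v \<in> approx_image_ball C k" using u v by (auto simp: approx_image_ball_def)
      then show "v \<in> (\<Union>k::nat. approx_image_ball C k)" by blast
    qed
  qed (auto simp: approx_image_ball_def)
  have "\<exists>k::nat. lp.mtopology interior_of approx_image_ball C k \<noteq> {}"
  proof (rule ccontr)
    assume "\<not> ?thesis"
    then have "lp.mtopology interior_of (\<Union>k::nat. approx_image_ball C k) = {}"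
      using lp.metric_Baire_category_alt[OF lp_mcomplete, of "range (\<lambda>k::nat. approx_image_ball C k)"]
        closedin_approx_image_ball[OF C] by auto
    then have "X = ({} :: ('a \<Rightarrow> complex) set)"
      using cover interior_of_topspace[of lp.mtopology] lp.topspace_mtopology by auto
    then show False using X_zero by blast
  qed
  then obtain k :: nat and v0 where v0: "v0 \<in> lp.mtopology interior_of approx_image_ball C k"
    by blast
  moreover have "openin lp.mtopology (lp.mtopology interior_of approx_image_ball C k)"
    by (rule openin_interior_of)
  ultimately obtain r where "r > 0" "lp.mball v0 r \<subseteq> lp.mtopology interior_of approx_image_ball C k"
    unfolding lp.openin_mtopology by blast
  moreover have "v0 \<in> X"
    using v0 interior_of_subset[of lp.mtopology] by (auto simp: approx_image_ball_def)
  ultimately show thesis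
    using that interior_of_subset[of lp.mtopology "approx_image_ball C k"] by blast
qed

definition approx_solvable :: "(('a \<Rightarrow> complex) \<Rightarrow> ('a \<Rightarrow> complex)) \<Rightarrow> real \<Rightarrow> bool" where
  "approx_solvable C K \<longleftrightarrow> (\<forall>z\<in>X. \<forall>e>0. \<exists>u\<in>X. N u \<le> K * N z \<and> N (\<lambda>x. C u x - z x) < e)"

lemma approx_solvable_near_zero:
  fixes C :: "('a \<Rightarrow> complex) \<Rightarrow> ('a \<Rightarrow> complex)"
  assumes C: "bounded_op p C" and v0: "v0 \<in> X" and r: "r > 0"
    and ball: "\<And>v. v \<in> X \<Longrightarrow> N (\<lambda>x. v0 x - v x) < r \<Longrightarrow> v \<in> approx_image_ball C c"
    and z: "z \<in> X" "N z < r" and e: "e > 0"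
  shows "\<exists>u\<in>X. N u \<le> 2 * c \<and> N (\<lambda>x. C u x - z x) < e"
proof -
  have approx: "\<exists>u\<in>X. N u \<le> c \<and> N (\<lambda>x. C u x - v x) < e / 2"
    if "v \<in> X" "N (\<lambda>x. v0 x - v x) < r" for v
  proof -
    have "e / 2 > 0" using e by simp
    then show ?thesis using ball[OF that] unfolding approx_image_ball_def by blast
  qed
  \<comment> \<open>approximate solutions for \<open>v0 + z\<close> and for \<open>v0\<close> subtract to one for \<open>z\<close>\<close>
  have vz: "(\<lambda>x. v0 x + z x) \<in> X" using X_add[OF v0 z(1)] .
  then obtain u1 where u1: "u1 \<in> X" "N u1 \<le> c" "N (\<lambda>x. C u1 x - (v0 x + z x)) < e / 2"
    using approx[of "\<lambda>x. v0 x + z x"] z(2) by (auto simp: N_minus)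
  obtain u2 where u2: "u2 \<in> X" "N u2 \<le> c" "N (\<lambda>x. C u2 x - v0 x) < e / 2"
    using approx[OF v0] r by auto
  have "(\<lambda>x. C (\<lambda>x. u1 x - u2 x) x - z x) = (\<lambda>x. (C u1 x - (v0 x + z x)) - (C u2 x - v0 x))"
    using bounded_op_diff[OF C u1(1) u2(1)] by (simp add: algebra_simps)
  moreover have "N (\<lambda>x. (C u1 x - (v0 x + z x)) - (C u2 x - v0 x))
      \<le> N (\<lambda>x. C u1 x - (v0 x + z x)) + N (\<lambda>x. C u2 x - v0 x)"
    using X_diff[OF bounded_op_mem[OF C u1(1)] vz] X_diff[OF bounded_op_mem[OF C u2(1)] v0]
    by (rule N_diff_le)
  ultimately have "N (\<lambda>x. C (\<lambda>x. u1 x - u2 x) x - z x) < e" using u1(3) u2(3) by simp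
  moreover have "N (\<lambda>x. u1 x - u2 x) \<le> 2 * c" using N_diff_le[OF u1(1) u2(1)] u1 u2 by simp
  ultimately show ?thesis using X_diff[OF u1(1) u2(1)] by blast
qed

lemma approx_solvable_by_scaling:
  fixes C :: "('a \<Rightarrow> complex) \<Rightarrow> ('a \<Rightarrow> complex)"
  assumes C: "bounded_op p C" and r: "r > 0"
    and small: "\<And>z e. z \<in> X \<Longrightarrow> N z < r \<Longrightarrow> e > 0 \<Longrightarrow> \<exists>u\<in>X. N u \<le> c \<and> N (\<lambda>x. C u x - z x) < e"
  shows "approx_solvable C (2 * c / r)"
  unfolding approx_solvable_def
proof (intro ballI allI impI)
  fix z :: "'a \<Rightarrow> complex" and e :: real assume z: "z \<in> X" and e: "e > 0"
  show "\<exists>u\<in>X. N u \<le> 2 * c / r * N z \<and> N (\<lambda>x. C u x - z x) < e"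
  proof (cases "N z = 0")
    case True
    then have "z = (\<lambda>x. 0)" by (rule N_eq_0D[OF z])
    then show ?thesis using e by (intro bexI[of _ "\<lambda>x. 0"]) (simp_all add: bounded_op_zero[OF C])
  next
    case False
    then have nz: "N z > 0" using N_nonneg[of z] by simp
    define l where "l = r / (2 * N z)"
    have l: "l > 0" using nz r by (simp add: l_def)
    have "N (\<lambda>x. of_real l * z x) = l * N z" using N_scale[OF z] l by simp
    also have "\<dots> < r" using nz r by (simp add: l_def)
    finally obtain u where u: "u \<in> X" "N u \<le> c" "N (\<lambda>x. C u x - of_real l * z x) < l * e"
      using small[OF X_scale[OF z] _ mult_pos_pos[OF l e]] by blast
    have "N (\<lambda>x. C (\<lambda>x. of_real (1 / l) * u x) x - z x)
        = N (\<lambda>x. of_real (1 / l) * (C u x - of_real l * z x))"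
      unfolding bounded_op_scale[OF C u(1)] using l
      by (intro arg_cong[where f = N]) (simp add: fun_eq_iff field_simps)
    also have "\<dots> = N (\<lambda>x. C u x - of_real l * z x) / l"
      unfolding N_scale[OF X_diff[OF bounded_op_mem[OF C u(1)] X_scale[OF z]]] using l
      by (simp add: norm_divide)
    also have "\<dots> < e" using u(3) l by (simp add: field_simps)
    finally have "N (\<lambda>x. C (\<lambda>x. of_real (1 / l) * u x) x - z x) < e" .
    moreover have "N (\<lambda>x. of_real (1 / l) * u x) = N u / l"
      unfolding N_scale[OF u(1)] using l by (simp add: norm_divide)
    moreover have "N u / l \<le> 2 * c / r * N z"
      using u(2) l nz r by (simp add: l_def field_simps)
    ultimately show ?thesis using X_scale[OF u(1)] by (metis order.trans order.refl)
  qed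
qed

lemma approx_solvable_linear_bound:
  fixes C :: "('a \<Rightarrow> complex) \<Rightarrow> ('a \<Rightarrow> complex)"
  assumes C: "bounded_op p C" and surj: "\<And>v. v \<in> X \<Longrightarrow> \<exists>u\<in>X. C u = v"
  obtains K where "K \<ge> 0" "approx_solvable C K"
proof -
  interpret lp: Metric_space X lp_dist by (rule lp_metric)
  obtain k :: nat and v0 r where r: "r > 0" and v0: "v0 \<in> X"
    and ball: "lp.mball v0 r \<subseteq> approx_image_ball C k"
    by (rule approx_image_ball_contains_ball[OF C surj])
  have "approx_solvable C (2 * (2 * real k) / r)"
  proof (rule approx_solvable_by_scaling[OF C r])
    show "\<exists>u\<in>X. N u \<le> 2 * real k \<and> N (\<lambda>x. C u x - z x) < e" if "z \<in> X" "N z < r" "e > 0" for z e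
      using ball v0 by (intro approx_solvable_near_zero[OF C v0 r _ that]) auto
  qed
  then show thesis using r by (intro that) auto
qed

lemma successive_approximation:
  fixes C :: "('a \<Rightarrow> complex) \<Rightarrow> ('a \<Rightarrow> complex)"
  assumes C: "bounded_op p C" and K: "K \<ge> 0"
    and approx: "approx_solvable C K"
    and y: "y \<in> X" "N y \<le> a" and a: "a > 0"
  obtains us where "\<And>n. us n \<in> X" "\<And>n. N (us n) \<le> K * a * (1/2) ^ n"
    "\<And>n. N (\<lambda>x. y x - C (\<lambda>x. \<Sum>i<n. us i x) x) \<le> a * (1/2) ^ n"
proof -
  have "\<forall>z n. \<exists>u. z \<in> X \<longrightarrow> u \<in> X \<and> N u \<le> K * N z \<and> N (\<lambda>x. C u x - z x) < a * (1/2) ^ Suc n"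
  proof (intro allI)
    fix z n
    have "a * (1/2) ^ Suc n > 0" using a by simp
    then show "\<exists>u. z \<in> X \<longrightarrow> u \<in> X \<and> N u \<le> K * N z \<and> N (\<lambda>x. C u x - z x) < a * (1/2) ^ Suc n"
      using approx unfolding approx_solvable_def by blast
  qed
  then obtain sel where sel: "\<And>z n. z \<in> X \<Longrightarrow>
      sel z n \<in> X \<and> N (sel z n) \<le> K * N z \<and> N (\<lambda>x. C (sel z n) x - z x) < a * (1/2) ^ Suc n"
    by metis
  \<comment> \<open>\<open>ys n\<close> is the residual left after \<open>n\<close> corrections\<close>
  define ys where "ys = rec_nat y (\<lambda>n r. \<lambda>x. r x - C (sel r n) x)"
  define us where "us n = sel (ys n) n" for n
  have ys_Suc: "ys (Suc n) = (\<lambda>x. ys n x - C (us n) x)" for n by (simp add: ys_def us_def)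
  have ys: "ys n \<in> X \<and> N (ys n) \<le> a * (1/2) ^ n" for n
  proof (induction n)
    case 0 then show ?case using y by (simp add: ys_def)
  next
    case (Suc n)
    have u: "us n \<in> X" "N (\<lambda>x. C (us n) x - ys n x) < a * (1/2) ^ Suc n"
      using sel[of "ys n" n] Suc by (auto simp: us_def)
    have "ys (Suc n) \<in> X" unfolding ys_Suc using X_diff Suc bounded_op_mem[OF C u(1)] by blast
    moreover have "N (ys (Suc n)) = N (\<lambda>x. C (us n) x - ys n x)" unfolding ys_Suc by (rule N_minus_commute)
    ultimately show ?case using u(2) by simp
  qed
  have us: "us n \<in> X" for n using sel[of "ys n" n] ys by (simp add: us_def)
  have us_bound: "N (us n) \<le> K * a * (1/2) ^ n" for n
  proof -
    have "N (us n) \<le> K * N (ys n)" using sel[of "ys n" n] ys by (simp add: us_def)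
    also have "\<dots> \<le> K * (a * (1/2) ^ n)" using ys K by (intro mult_left_mono) auto
    finally show ?thesis by simp
  qed
  have "C (\<lambda>x. \<Sum>i<n. us i x) = (\<lambda>x. y x - ys n x)" for n
  proof (induction n)
    case 0 then show ?case using bounded_op_zero[OF C] by (simp add: ys_def)
  next
    case (Suc n)
    have "(\<lambda>x. \<Sum>i<n. us i x) \<in> X" using X_lincomb[of "{..<n}" us "\<lambda>_. 1"] us by simp
    then have "C (\<lambda>x. \<Sum>i<Suc n. us i x) = (\<lambda>x. C (\<lambda>x. \<Sum>i<n. us i x) x + C (us n) x)"
      using bounded_op_add[OF C _ us] by simp
    then show ?case using Suc by (simp add: ys_Suc fun_eq_iff)
  qed
  then have "N (\<lambda>x. y x - C (\<lambda>x. \<Sum>i<n. us i x) x) \<le> a * (1/2) ^ n" for n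
    using ys by simp
  with us us_bound show thesis by (rule that)
qed

lemma sum_half_powers_le: "(\<Sum>i\<in>{n..<m}. (1/2::real) ^ i) \<le> 2 * (1/2) ^ n"
proof (cases "n \<le> m")
  case True
  have "(\<Sum>i\<in>{n..<m}. (1/2::real) ^ i) = 2 * (1/2) ^ n - 2 * (1/2) ^ m"
    using True by (induction m rule: dec_induct) simp_all
  then show ?thesis by simp
qed simp

lemma geometric_series_X:
  assumes us: "\<And>n. us n \<in> X" "\<And>n. N (us n) \<le> c * (1/2) ^ n" and c: "c \<ge> 0"
  obtains s where "s \<in> X" "N s \<le> 2 * c"
    "\<And>e. e > 0 \<Longrightarrow> \<exists>L. \<forall>k\<ge>L. N (\<lambda>x. (\<Sum>i<k. us i x) - s x) \<le> e"
proof -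
  define ps where "ps k = (\<lambda>x. \<Sum>i<k. us i x)" for k
  have sums: "(\<lambda>x. \<Sum>i\<in>I. us i x) \<in> X \<and> N (\<lambda>x. \<Sum>i\<in>I. us i x) \<le> c * (\<Sum>i\<in>I. (1/2) ^ i)"
    if "finite I" for I
    using X_lincomb[OF that, of us "\<lambda>_. 1"] us sum_mono[of I "\<lambda>i. N (us i)" "\<lambda>i. c * (1/2) ^ i"]
    by (simp add: sum_distrib_left)
  have ps: "ps k \<in> X" for k using sums[of "{..<k}"] by (simp add: ps_def)
  have ps_diff: "N (\<lambda>x. ps k x - ps l x) \<le> 2 * c * (1/2) ^ l" if "l \<le> k" for k l
  proof -
    have "(\<lambda>x. ps k x - ps l x) = (\<lambda>x. \<Sum>i\<in>{l..<k}. us i x)"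
      using that by (simp add: ps_def lessThan_atLeast0 sum_diff_nat_ivl)
    then show ?thesis
      using sums[of "{l..<k}"] mult_left_mono[OF sum_half_powers_le[of l k] c] by simp
  qed
  have small: "\<exists>L. \<forall>l\<ge>L. 2 * c * (1/2) ^ l < e" if "e > 0" for e
  proof -
    have "(\<lambda>l. 2 * c * (1/2::real) ^ l) \<longlonglongrightarrow> 0"
      by (intro tendsto_mult_right_zero LIMSEQ_power_zero) simp
    from order_tendstoD(2)[OF this that] show ?thesis by (simp add: eventually_sequentially)
  qed
  have cauchy: "\<exists>L. \<forall>k\<ge>L. \<forall>l\<ge>L. N (\<lambda>x. ps k x - ps l x) < e" if e: "e > 0" for e
  proof -
    obtain L where L: "\<forall>l\<ge>L. 2 * c * (1/2) ^ l < e" using small[OF e] by blast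
    have "N (\<lambda>x. ps k x - ps l x) < e" if "k \<ge> L" "l \<ge> L" for k l
      using ps_diff[of l k] ps_diff[of k l] N_minus_commute[of "ps k" "ps l"] L that
      by (cases "l \<le> k") (auto intro: order_le_less_trans)
    then show ?thesis by blast
  qed
  obtain s where s: "s \<in> X" "\<And>e. e > 0 \<Longrightarrow> \<exists>L. \<forall>k\<ge>L. N (\<lambda>x. ps k x - s x) \<le> e"
    using X_complete[of ps, OF ps cauchy] by blast
  have "N s \<le> 2 * c + e" if e: "e > 0" for e
  proof -
    obtain k where k: "N (\<lambda>x. ps k x - s x) \<le> e" using s(2)[OF e] by blast
    have "N s \<le> N (ps k) + N (\<lambda>x. ps k x - s x)"
      using N_diff_le[OF ps X_diff[OF ps s(1)], of k k] by simp
    moreover have "N (ps k) \<le> 2 * c"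
      using ps_diff[of 0 k] by (simp add: ps_def)
    ultimately show ?thesis using k by simp
  qed
  then have "N s \<le> 2 * c" by (rule field_le_epsilon)
  with s show thesis unfolding ps_def by (intro that) blast+
qed

lemma solution_with_bound:
  fixes C :: "('a \<Rightarrow> complex) \<Rightarrow> ('a \<Rightarrow> complex)"
  assumes C: "bounded_op p C" and K: "K \<ge> 0"
    and approx: "approx_solvable C K"
    and y: "y \<in> X" "N y \<le> a" and a: "a > 0"
  obtains s where "s \<in> X" "C s = y" "N s \<le> 2 * K * a"
proof -
  obtain us where us: "\<And>n. us n \<in> X" "\<And>n. N (us n) \<le> K * a * (1/2) ^ n"
    and residual: "\<And>n. N (\<lambda>x. y x - C (\<lambda>x. \<Sum>i<n. us i x) x) \<le> a * (1/2) ^ n"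
    using successive_approximation[OF C K approx y a] by blast
  define ps where "ps k = (\<lambda>x. \<Sum>i<k. us i x)" for k
  have ps: "ps k \<in> X" for k using X_lincomb[of "{..<k}" us "\<lambda>_. 1"] us(1) by (simp add: ps_def)
  have "K * a \<ge> 0" using K a by simp
  then obtain s where s: "s \<in> X" "N s \<le> 2 * (K * a)"
    and lim: "\<And>e. e > 0 \<Longrightarrow> \<exists>L. \<forall>k\<ge>L. N (\<lambda>x. ps k x - s x) \<le> e"
    unfolding ps_def by (rule geometric_series_X[OF us]) blast
  obtain B where B: "B \<ge> 0" "\<And>u. u \<in> X \<Longrightarrow> N (C u) \<le> B * N u"
    using bounded_op_bound[OF C] by blast
  have "N (\<lambda>x. C s x - y x) \<le> e" if e: "e > 0" for e
  proof -
    have "e / (2 * (B + 1)) > 0" using B e by simp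
    then obtain L1 where L1: "\<forall>k\<ge>L1. N (\<lambda>x. ps k x - s x) \<le> e / (2 * (B + 1))"
      using lim by blast
    have "(\<lambda>l. a * (1/2::real) ^ l) \<longlonglongrightarrow> 0"
      by (intro tendsto_mult_right_zero LIMSEQ_power_zero) simp
    from order_tendstoD(2)[OF this half_gt_zero[OF e]]
    obtain L2 where L2: "\<forall>l\<ge>L2. a * (1/2) ^ l < e / 2" by (auto simp: eventually_sequentially)
    define k where "k = max L1 L2"
    have "N (\<lambda>x. C s x - y x) \<le> N (\<lambda>x. C s x - C (ps k) x) + N (\<lambda>x. C (ps k) x - y x)"
      using bounded_op_mem[OF C s(1)] bounded_op_mem[OF C ps[of k]] y(1) by (rule N_triangle)
    moreover have "N (\<lambda>x. C s x - C (ps k) x) \<le> B * N (\<lambda>x. ps k x - s x)"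
      using B(2)[OF X_diff[OF s(1) ps[of k]]] bounded_op_diff[OF C s(1) ps[of k]]
        N_minus_commute[of s "ps k"]
      by simp
    moreover have "B * N (\<lambda>x. ps k x - s x) \<le> B * (e / (2 * (B + 1)))"
      using L1 B by (intro mult_left_mono) (auto simp: k_def)
    moreover have "B * (e / (2 * (B + 1))) \<le> e / 2" using B e by (simp add: field_simps)
    moreover have "N (\<lambda>x. C (ps k) x - y x) \<le> a * (1/2) ^ k"
      using residual[of k] N_minus_commute[of y "C (ps k)"] by (simp add: ps_def)
    moreover have "a * (1/2) ^ k < e / 2" using L2 by (simp add: k_def)
    ultimately show ?thesis by linarith
  qed
  then have "N (\<lambda>x. C s x - y x) \<le> 0" by (rule dense_ge)
  then have "N (\<lambda>x. C s x - y x) = 0" using N_nonneg by (rule antisym)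
  then have "(\<lambda>x. C s x - y x) = (\<lambda>x. 0)"
    by (rule N_eq_0D[OF X_diff[OF bounded_op_mem[OF C s(1)] y(1)]])
  then have "C s = y" by (simp add: fun_eq_iff)
  with s show thesis by (intro that) (simp_all add: mult.assoc)
qed

lemma bounded_below_if_bijective:
  fixes C :: "('a \<Rightarrow> complex) \<Rightarrow> ('a \<Rightarrow> complex)"
  assumes C: "bounded_op p C" and surj: "\<And>v. v \<in> X \<Longrightarrow> \<exists>u\<in>X. C u = v"
    and inj: "\<And>u. u \<in> X \<Longrightarrow> C u = (\<lambda>x. 0) \<Longrightarrow> u = (\<lambda>x. 0)"
  obtains M where "\<And>u. u \<in> X \<Longrightarrow> N u \<le> M * N (C u)"
proof -
  obtain K where K: "K \<ge> 0" and approx: "approx_solvable C K"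
    using approx_solvable_linear_bound[OF C surj] by blast
  have "N u \<le> 2 * K * N (C u)" if u: "u \<in> X" for u
  proof (rule field_le_epsilon)
    fix e :: real assume e: "e > 0"
    define \<delta> where "\<delta> = e / (2 * K + 1)"
    have \<delta>: "\<delta> > 0" using e K by (simp add: \<delta>_def)
    have "N (C u) \<le> N (C u) + \<delta>" "N (C u) + \<delta> > 0" using \<delta> N_nonneg[of "C u"] by auto
    then obtain s where s: "s \<in> X" "C s = C u" "N s \<le> 2 * K * (N (C u) + \<delta>)"
      by (rule solution_with_bound[OF C K approx bounded_op_mem[OF C u]])
    have "C (\<lambda>x. u x - s x) = (\<lambda>x. 0)" using bounded_op_diff[OF C u s(1)] s(2) by simp
    then have "u = s" using inj[OF X_diff[OF u s(1)]] by (simp add: fun_eq_iff)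
    moreover have "2 * K * \<delta> \<le> e" using K e by (simp add: \<delta>_def field_simps)
    ultimately show "N u \<le> 2 * K * N (C u) + e" using s(3) by (simp add: algebra_simps)
  qed
  then show thesis by (rule that)
qed

lemma invertible_imp_fredholm:
  assumes "invertible_op p C"
  shows "fredholm p C"
proof -
  obtain B where C: "bounded_op p C" and B: "bounded_op p B"
    and BC: "\<And>u. u \<in> X \<Longrightarrow> B (C u) = u \<and> C (B u) = u"
    using assms by (auto simp: invertible_op_def)
  have "{u \<in> X. C u = (\<lambda>x. 0)} \<subseteq> cspan_fun {}"
  proof
    fix u assume "u \<in> {u \<in> X. C u = (\<lambda>x. 0)}"
    then have "u = B (\<lambda>x. 0)" using BC by force
    then show "u \<in> cspan_fun {}" using bounded_op_zero[OF B] cspan_fun_zero by simp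
  qed
  moreover have "\<exists>u\<in>X. (\<lambda>x. v x - C u x) \<in> cspan_fun {}" if "v \<in> X" for v
    using that BC bounded_op_mem[OF B] cspan_fun_zero by (intro bexI[of _ "B v"]) auto
  ultimately show ?thesis
    unfolding fredholm_def using C BC bounded_op_mem[OF B] by blast
qed

lemma invertible_if_bijective:
  fixes C :: "('a \<Rightarrow> complex) \<Rightarrow> ('a \<Rightarrow> complex)"
  assumes C: "bounded_op p C" and surj: "\<And>v. v \<in> X \<Longrightarrow> \<exists>u\<in>X. C u = v"
    and inj: "\<And>u. u \<in> X \<Longrightarrow> C u = (\<lambda>x. 0) \<Longrightarrow> u = (\<lambda>x. 0)"
  shows "invertible_op p C"
proof -
  have inj_on: "u = v" if "u \<in> X" "v \<in> X" "C u = C v" for u v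
    using inj[OF X_diff[OF that(1,2)]] bounded_op_diff[OF C that(1,2)] that(3) by (simp add: fun_eq_iff)
  obtain M where M: "\<And>u. u \<in> X \<Longrightarrow> N u \<le> M * N (C u)"
    using bounded_below_if_bijective[OF C surj inj] by blast
  define B where "B v = (SOME u. u \<in> X \<and> C u = v)" for v
  have B: "B v \<in> X \<and> C (B v) = v" if "v \<in> X" for v
    using someI_ex[of "\<lambda>u. u \<in> X \<and> C u = v"] surj[OF that] by (auto simp: B_def)
  have "bounded_op p B"
    unfolding bounded_op_def
  proof (intro conjI ballI allI)
    show "B u \<in> X" if "u \<in> X" for u using B[OF that] ..
    show "B (\<lambda>x. u x + v x) = (\<lambda>x. B u x + B v x)" if u: "u \<in> X" and v: "v \<in> X" for u v
    proof (rule inj_on)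
      show "C (B (\<lambda>x. u x + v x)) = C (\<lambda>x. B u x + B v x)"
        using B[OF X_add[OF u v]] B[OF u] B[OF v] bounded_op_add[OF C, of "B u" "B v"] by simp
    qed (use B X_add u v in blast)+
    show "B (\<lambda>x. c * u x) = (\<lambda>x. c * B u x)" if u: "u \<in> X" for u c
    proof (rule inj_on)
      show "C (B (\<lambda>x. c * u x)) = C (\<lambda>x. c * B u x)"
        using B[OF X_scale[OF u]] B[OF u] bounded_op_scale[OF C, of "B u"] by simp
    qed (use B X_scale u in blast)+
    have "N (B u) \<le> M * N u" if "u \<in> X" for u using M[of "B u"] B[OF that] by simp
    then show "\<exists>M. \<forall>u\<in>X. N (B u) \<le> M * N u" by blast
  qed
  moreover have "\<forall>u\<in>X. B (C u) = u \<and> C (B u) = u"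
    using B inj_on bounded_op_mem[OF C] by blast
  ultimately show ?thesis unfolding invertible_op_def using C by blast
qed

lemma subspace_eq_if_distance_contracts:
  assumes RX: "R \<subseteq> X" and R: "fun_subspace R"
    and closed: "\<And>v. v \<in> X \<Longrightarrow> (\<forall>e>0. \<exists>r\<in>R. N (\<lambda>x. r x - v x) < e) \<Longrightarrow> v \<in> R"
    and \<theta>: "0 \<le> \<theta>" "\<theta> < 1"
    and contracts: "\<And>w e. w \<in> X \<Longrightarrow> e > 0 \<Longrightarrow> \<exists>r\<in>R. N (\<lambda>x. w x - r x) \<le> \<theta> * N w + e"
    and v: "v \<in> X"
  shows "v \<in> R"
proof (rule ccontr)
  assume vR: "v \<notin> R"
  \<comment> \<open>a near-best approximation of \<open>v\<close> from \<open>R\<close> could be improved\<close>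
  define \<delta> where "\<delta> = (INF r\<in>R. N (\<lambda>x. v x - r x))"
  have R0: "(\<lambda>x. 0) \<in> R" by (rule fun_subspace_zero[OF R])
  have bdd: "bdd_below ((\<lambda>r. N (\<lambda>x. v x - r x)) ` R)" by (rule bdd_belowI[of _ 0]) (auto simp: N_nonneg)
  have \<delta>_le: "\<delta> \<le> N (\<lambda>x. v x - r x)" if "r \<in> R" for r
    unfolding \<delta>_def using bdd that by (rule cINF_lower)
  have near: "\<exists>r\<in>R. N (\<lambda>x. v x - r x) < \<delta> + e" if "e > 0" for e
    using cINF_less_iff[OF _ bdd, of "\<delta> + e"] R0 that by (auto simp: \<delta>_def)
  have \<delta>_pos: "\<delta> > 0"
  proof (rule ccontr)
    assume "\<not> \<delta> > 0"
    then have "\<exists>r\<in>R. N (\<lambda>x. r x - v x) < e" if "e > 0" for e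
      using near[OF that] N_minus_commute[of v] by (metis add_le_same_cancel2 not_less order_le_less_trans)
    then show False using closed[OF v] vR by blast
  qed
  define \<eta> where "\<eta> = \<delta> * (1 - \<theta>) / 4"
  have \<eta>: "\<eta> > 0" using \<delta>_pos \<theta> by (simp add: \<eta>_def)
  obtain r0 where r0: "r0 \<in> R" "N (\<lambda>x. v x - r0 x) < \<delta> + \<eta>" using near[OF \<eta>] by blast
  define w where "w = (\<lambda>x. v x - r0 x)"
  have w: "w \<in> X" unfolding w_def using X_diff v RX r0(1) by blast
  obtain r where r: "r \<in> R" "N (\<lambda>x. w x - r x) \<le> \<theta> * N w + \<eta>" using contracts[OF w \<eta>] by blast
  have "\<theta> * N w \<le> \<theta> * (\<delta> + \<eta>)" using r0 \<theta> by (intro mult_left_mono) (auto simp: w_def)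
  then have "\<theta> * N w \<le> \<theta> * \<delta> + \<theta> * \<eta>" by (simp add: distrib_left)
  moreover have "\<theta> * \<eta> \<le> \<eta>" using \<theta> \<eta> by (simp add: mult_left_le_one_le)
  moreover have "\<theta> * \<delta> < \<delta>" using mult_strict_right_mono[OF \<theta>(2) \<delta>_pos] by simp
  moreover have "4 * \<eta> = \<delta> - \<theta> * \<delta>" by (simp add: \<eta>_def right_diff_distrib mult.commute)
  ultimately have "N (\<lambda>x. w x - r x) < \<delta>" using r(2) by linarith
  moreover have "(\<lambda>x. r0 x + r x) \<in> R" using fun_subspace_add[OF R r0(1) r(1)] .
  then have "\<delta> \<le> N (\<lambda>x. w x - r x)" using \<delta>_le by (simp add: w_def algebra_simps)
  ultimately show False by simp
qed

end
section \<open>Shift-invariant subspaces\<close>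

definition shift_invariant :: "(int ^ 'n \<Rightarrow> 'a \<Rightarrow> 'a) \<Rightarrow> ('a \<Rightarrow> complex) set \<Rightarrow> bool" where
  "shift_invariant act R \<longleftrightarrow> (\<forall>u\<in>R. \<forall>\<alpha>. shift act \<alpha> u \<in> R)"

locale periodic_lp = lp_exponent p for p +
  fixes act :: "int ^ 'n \<Rightarrow> 'a \<Rightarrow> 'a"
  assumes act_zero: "\<And>x. act 0 x = x"
    and act_add: "\<And>\<alpha> \<beta> x. act (\<alpha> + \<beta>) x = act \<alpha> (act \<beta> x)"
    and act_free: "\<And>\<alpha> x. act \<alpha> x = x \<Longrightarrow> \<alpha> = 0"
begin

lemma act_neg_cancel: "act (- \<alpha>) (act \<alpha> x) = x" "act \<alpha> (act (- \<alpha>) x) = x"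
  using act_add[of "- \<alpha>" \<alpha> x] act_add[of \<alpha> "- \<alpha>" x] act_zero by simp_all

lemma act_eq_imp_eq:
  assumes "act \<alpha> x = act \<beta> x"
  shows "\<alpha> = \<beta>"
proof -
  have "act (- \<beta> + \<alpha>) x = x" using assms act_neg_cancel(1)[of \<beta> x] by (simp only: act_add)
  then have "- \<beta> + \<alpha> = 0" by (rule act_free)
  then show ?thesis by (simp add: algebra_simps)
qed

lemma bij_act: "bij (act \<alpha>)"
  by (rule bij_betw_byWitness[where f' = "act (- \<alpha>)"]) (auto simp: act_neg_cancel)

lemma shift_shift: "shift act \<alpha> (shift act \<beta> u) = shift act (\<alpha> + \<beta>) u"
  by (simp add: shift_def act_add[symmetric] add.commute)

lemma shift_zero: "shift act 0 u = u"
  by (simp add: shift_def act_zero)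

lemma S_shift: "S (shift act \<alpha> u) = S u"
  unfolding shift_def
  using infsum_reindex_bij_betw[OF bij_act[of "- \<alpha>"], of "\<lambda>x. norm (u x) powr p"] by simp

lemma X_shift: "u \<in> X \<Longrightarrow> shift act \<alpha> u \<in> X"
  unfolding shift_def mem_X_iff
  using summable_on_reindex_bij_betw[OF bij_act[of "- \<alpha>"], of "\<lambda>x. norm (u x) powr p"] by simp

lemma N_shift: "N (shift act \<alpha> u) = N u"
  by (simp add: N_eq_S_powr S_shift)

lemma shift_lincomb:
  "shift act \<alpha> (\<lambda>x. \<Sum>j\<in>J. c j * u j x) = (\<lambda>x. \<Sum>j\<in>J. c j * shift act \<alpha> (u j) x)"
  by (simp add: shift_def)

text \<open>Freeness makes each equation \<open>act (vec (d * L)) g1 = g2\<close> with \<open>d \<noteq> 0\<close> hold for at most one \<open>L\<close>.\<close>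
lemma separating_period:
  assumes "finite G"
  obtains L :: int where
    "\<And>d g1 g2. d \<in> {- int m..int m} - {0} \<Longrightarrow> g1 \<in> G \<Longrightarrow> g2 \<in> G \<Longrightarrow> act (vec (d * L)) g1 \<noteq> g2"
proof -
  have "finite {L. act (vec (d * L)) g1 = g2}" if "d \<noteq> 0" for d g1 g2
  proof (rule finite_subset)
    show "{L. act (vec (d * L)) g1 = g2} \<subseteq> {SOME L. act (vec (d * L)) g1 = g2}"
    proof
      fix L assume L: "L \<in> {L. act (vec (d * L)) g1 = g2}"
      then have "act (vec (d * (SOME L. act (vec (d * L)) g1 = g2))) g1 = g2" by (auto intro: someI)
      with L have "vec (d * L) = (vec (d * (SOME L. act (vec (d * L)) g1 = g2)) :: int ^ 'n)"
        by (intro act_eq_imp_eq[of _ g1]) simp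
      then show "L \<in> {SOME L. act (vec (d * L)) g1 = g2}" using that by simp
    qed
  qed simp
  then have "finite (\<Union>(d, g1, g2)\<in>({- int m..int m} - {0}) \<times> G \<times> G. {L. act (vec (d * L)) g1 = g2})"
    using assms by (intro finite_UN_I) auto
  then obtain L where "L \<notin> (\<Union>(d, g1, g2)\<in>({- int m..int m} - {0}) \<times> G \<times> G. {L. act (vec (d * L)) g1 = g2})"
    using ex_new_if_finite[OF infinite_UNIV_int] by blast
  then show thesis by (intro that) blast
qed

lemma N_lincomb_separated_shifts:
  assumes J: "finite J" and w: "w \<in> X" and supp: "\<And>x. x \<notin> G \<Longrightarrow> w x = 0"
    and sep: "\<And>i j g1 g2. i \<in> J \<Longrightarrow> j \<in> J \<Longrightarrow> i \<noteq> j \<Longrightarrow> g1 \<in> G \<Longrightarrow> g2 \<in> G \<Longrightarrow>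
      act (\<alpha> i - \<alpha> j) g1 \<noteq> g2"
  shows "N (\<lambda>x. \<Sum>j\<in>J. k j * shift act (\<alpha> j) w x) = (\<Sum>j\<in>J. norm (k j) powr p) powr (1 / p) * N w"
proof -
  have disj: "k i * shift act (\<alpha> i) w x = 0 \<or> k j * shift act (\<alpha> j) w x = 0"
    if "i \<in> J" "j \<in> J" "i \<noteq> j" for i j x
  proof (rule ccontr)
    assume "\<not> ?thesis"
    then have G: "act (- \<alpha> i) x \<in> G" "act (- \<alpha> j) x \<in> G" using supp by (auto simp: shift_def)
    have "act (\<alpha> i - \<alpha> j) (act (- \<alpha> i) x) = act (- \<alpha> j) x"
      by (simp flip: act_add)
    then show False using sep[OF that G] by blast
  qed
  have "S (\<lambda>x. \<Sum>j\<in>J. k j * shift act (\<alpha> j) w x) = (\<Sum>j\<in>J. S (\<lambda>x. k j * shift act (\<alpha> j) w x))"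
    using disj by (intro S_sum_disjoint_supports[OF J]) (auto intro: X_scale X_shift w)
  also have "\<dots> = (\<Sum>j\<in>J. norm (k j) powr p) * S w"
    by (simp add: S_scale X_shift w S_shift sum_distrib_right)
  finally show ?thesis
    by (simp add: N_eq_S_powr powr_mult sum_nonneg)
qed

lemma N_lincomb_separated_shifts_le:
  fixes m :: nat and L :: int and j0 :: nat
  defines "ofs j \<equiv> (vec ((int j - int j0) * L) :: int ^ 'n)"
  assumes w: "w \<in> X" and G: "finite G"
    and L: "\<And>i g1 g2. i \<in> {- int m..int m} - {0} \<Longrightarrow> g1 \<in> G \<Longrightarrow> g2 \<in> G \<Longrightarrow> act (vec (i * L)) g1 \<noteq> g2"
    and k: "\<And>j. j \<in> {0..m} \<Longrightarrow> norm (k j) \<le> 1"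
  shows "N (\<lambda>x. \<Sum>j\<in>{0..m}. k j * shift act (ofs j) w x)
    \<le> (\<Sum>j\<in>{0..m}. norm (k j) powr p) powr (1 / p) * N w
       + (m + 1) * N (\<lambda>x. w x - (if x \<in> G then w x else 0))"
proof -
  define J where "J = {0..m}"
  have J: "finite J" "card J = m + 1" by (simp_all add: J_def)
  define wG where "wG = (\<lambda>x. if x \<in> G then w x else 0)"
  define d where "d = (\<lambda>x. w x - wG x)"
  have wG: "wG \<in> X" "N wG \<le> N w" using X_truncate[OF w] by (simp_all add: wG_def)
  have d: "d \<in> X" using X_diff[OF w wG(1)] by (simp add: d_def)
  define \<Phi> where "\<Phi> u = (\<lambda>x. \<Sum>j\<in>J. k j * shift act (ofs j) u x)" for u
  have "\<Phi> w = (\<lambda>x. \<Phi> wG x + \<Phi> d x)"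
    by (simp add: \<Phi>_def d_def shift_def algebra_simps sum.distrib[symmetric])
  moreover have "\<Phi> wG \<in> X"
    unfolding \<Phi>_def using X_lincomb[OF J(1), of "\<lambda>j. shift act (ofs j) wG" k] X_shift[OF wG(1)] by blast
  moreover have "\<Phi> d \<in> X"
    unfolding \<Phi>_def using X_lincomb[OF J(1), of "\<lambda>j. shift act (ofs j) d" k] X_shift[OF d] by blast
  ultimately have "N (\<Phi> w) \<le> N (\<Phi> wG) + N (\<Phi> d)" by (simp add: N_add_le)
  moreover have "N (\<Phi> wG) = (\<Sum>j\<in>J. norm (k j) powr p) powr (1 / p) * N wG"
    unfolding \<Phi>_def
  proof (rule N_lincomb_separated_shifts[OF J(1) wG(1)])
    show "wG x = 0" if "x \<notin> G" for x using that by (simp add: wG_def)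
    show "act (ofs i - ofs j) g1 \<noteq> g2" if "i \<in> J" "j \<in> J" "i \<noteq> j" "g1 \<in> G" "g2 \<in> G" for i j g1 g2
    proof -
      have "ofs i - ofs j = vec ((int i - int j) * L)" by (simp add: ofs_def vec_eq_iff algebra_simps)
      moreover have "int i - int j \<in> {- int m..int m} - {0}" using that by (auto simp: J_def)
      ultimately show ?thesis using L that(4,5) by simp
    qed
  qed
  moreover have "(\<Sum>j\<in>J. norm (k j) powr p) powr (1 / p) * N wG \<le> (\<Sum>j\<in>J. norm (k j) powr p) powr (1 / p) * N w"
    using wG(2) by (intro mult_left_mono) simp_all
  moreover have "N (\<Phi> d) \<le> (\<Sum>j\<in>J. norm (k j) * N (shift act (ofs j) d))"
    unfolding \<Phi>_def using X_lincomb[OF J(1), of "\<lambda>j. shift act (ofs j) d" k] X_shift[OF d] by blast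
  moreover have "(\<Sum>j\<in>J. norm (k j) * N (shift act (ofs j) d)) \<le> (\<Sum>j\<in>J. N d)"
    using k N_nonneg[of d] by (intro sum_mono) (simp add: J_def N_shift mult_left_le_one_le)
  ultimately show ?thesis using J(2) by (simp add: \<Phi>_def J_def d_def wG_def)
qed

lemma normalised_combination_in_subspace:
  fixes m :: nat and L :: int and t :: real
  assumes R: "fun_subspace R" "shift_invariant act R" and t: "0 \<le> t" "t \<le> 1"
    and c: "\<exists>j\<in>{0..m}. c j \<noteq> 0" "(\<lambda>x. \<Sum>j\<in>{0..m}. c j * shift act (vec (int j * L)) w x) \<in> R"
  obtains r k j0 where "r \<in> R" "\<And>j. j \<in> {0..m} \<Longrightarrow> norm (k j) \<le> 1"
    "(\<Sum>j\<in>{0..m}. norm (k j) powr p) \<le> (1 - t) powr p + real m * t powr p"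
    "(\<lambda>x. w x - r x) = (\<lambda>x. \<Sum>j\<in>{0..m}. k j * shift act (vec ((int j - int j0) * L)) w x)"
proof -
  define J where "J = {0..m}"
  have J: "finite J" "card J = m + 1" by (simp_all add: J_def)
  obtain j0 where "is_arg_min (\<lambda>j. - norm (c j)) (\<lambda>j. j \<in> J) j0"
    using ex_is_arg_min_if_finite[OF J(1)] J(2) by fastforce
  then have j0: "j0 \<in> J" "\<And>j. j \<in> J \<Longrightarrow> norm (c j) \<le> norm (c j0)"
    by (auto simp: is_arg_min_linorder)
  then have cj0: "c j0 \<noteq> 0" using c(1) by (force simp: J_def)
  define b where "b j = c j / c j0" for j
  define ofs where "ofs j = (vec ((int j - int j0) * L) :: int ^ 'n)" for j
  define k where "k j = (if j = j0 then 1 else 0) - of_real t * b j" for j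
  have b: "b j0 = 1" "\<And>j. j \<in> J \<Longrightarrow> norm (b j) \<le> 1"
    using j0(2) cj0 by (simp_all add: b_def norm_divide divide_le_eq_1)
  have k: "\<And>j. j \<in> J \<Longrightarrow> norm (k j) \<le> 1"
    "(\<Sum>j\<in>J. norm (k j) powr p) \<le> (1 - t) powr p + real m * t powr p"
    using powr_norm_coefficients_le[where b = b and J = J and jm = j0 and t = t, OF J(1) j0(1) b t p_pos] J(2)
    by (simp_all add: k_def)
  define r where "r = (\<lambda>x. of_real t * (\<Sum>j\<in>J. b j * shift act (ofs j) w x))"
  have "shift act (vec (- (int j0 * L))) (\<lambda>x. \<Sum>j\<in>J. c j * shift act (vec (int j * L)) w x) \<in> R"
    using R(2) c(2) by (simp add: shift_invariant_def J_def)
  then have "(\<lambda>x. \<Sum>j\<in>J. c j * shift act (ofs j) w x) \<in> R"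
    by (simp add: shift_lincomb shift_shift ofs_def algebra_simps flip: vec_add)
  then have "(\<lambda>x. (of_real t / c j0) * (\<Sum>j\<in>J. c j * shift act (ofs j) w x)) \<in> R"
    by (rule fun_subspace_scale[OF R(1)])
  moreover have "(\<lambda>x. (of_real t / c j0) * (\<Sum>j\<in>J. c j * shift act (ofs j) w x)) = r"
    by (simp add: r_def b_def fun_eq_iff sum_distrib_left)
  ultimately have "r \<in> R" by simp
  have "w x - r x = (\<Sum>j\<in>J. k j * shift act (ofs j) w x)" for x
  proof -
    have "(\<Sum>j\<in>J. (if j = j0 then 1 else 0) * shift act (ofs j) w x)
        = (\<Sum>j\<in>J. if j0 = j then shift act (ofs j) w x else 0)"
      by (rule sum.cong) auto
    also have "\<dots> = w x" using J(1) j0(1) by (simp add: sum.delta ofs_def shift_zero)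
    finally show ?thesis
      by (simp add: k_def r_def left_diff_distrib sum_subtractf sum_distrib_left mult.assoc)
  qed
  with \<open>r \<in> R\<close> k show thesis by (intro that[of r k j0]) (auto simp: J_def ofs_def)
qed

lemma contraction_step:
  fixes m :: nat and t e :: real
  assumes w: "w \<in> X" and R: "fun_subspace R" "shift_invariant act R"
    and dep: "\<And>L::int. \<exists>c. (\<exists>j\<in>{0..m}. c j \<noteq> 0) \<and>
                (\<lambda>x. \<Sum>j\<in>{0..m}. c j * shift act (vec (int j * L)) w x) \<in> R"
    and t: "0 \<le> t" "t \<le> 1" and e: "e > 0"
  obtains r where "r \<in> R"
    "N (\<lambda>x. w x - r x) \<le> ((1 - t) powr p + real m * t powr p) powr (1 / p) * N w + e"
proof -
  have "e / (m + 1) > 0" using e by simp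
  then obtain G where G: "finite G" "N (\<lambda>x. w x - (if x \<in> G then w x else 0)) < e / (m + 1)"
    using finite_truncation_approx[OF w] by blast
  obtain L :: int where L: "\<And>i g1 g2. i \<in> {- int m..int m} - {0} \<Longrightarrow> g1 \<in> G \<Longrightarrow> g2 \<in> G \<Longrightarrow>
      act (vec (i * L)) g1 \<noteq> g2"
    using separating_period[OF G(1)] by blast
  obtain c where c: "\<exists>j\<in>{0..m}. c j \<noteq> 0"
    "(\<lambda>x. \<Sum>j\<in>{0..m}. c j * shift act (vec (int j * L)) w x) \<in> R"
    using dep[of L] by blast
  obtain r k j0 where r: "r \<in> R" and k: "\<And>j. j \<in> {0..m} \<Longrightarrow> norm (k j) \<le> 1"
    "(\<Sum>j\<in>{0..m}. norm (k j) powr p) \<le> (1 - t) powr p + real m * t powr p"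
    and wr: "(\<lambda>x. w x - r x) = (\<lambda>x. \<Sum>j\<in>{0..m}. k j * shift act (vec ((int j - int j0) * L)) w x)"
    by (rule normalised_combination_in_subspace[OF R t c]) blast
  have "N (\<lambda>x. w x - r x) \<le> (\<Sum>j\<in>{0..m}. norm (k j) powr p) powr (1 / p) * N w
      + (m + 1) * N (\<lambda>x. w x - (if x \<in> G then w x else 0))"
    unfolding wr by (rule N_lincomb_separated_shifts_le[OF w G(1) L k(1)])
  also have "\<dots> \<le> ((1 - t) powr p + real m * t powr p) powr (1 / p) * N w + e"
    using k(2) G(2) p_pos N_nonneg[of w] by (intro add_mono mult_right_mono powr_mono2)
      (auto intro: sum_nonneg simp: field_simps)
  finally show thesis using r by (rule that[rotated])
qed

lemma uniform_distance_contraction: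
  assumes F: "finite F" and R: "fun_subspace R" "shift_invariant act R"
  obtains \<theta> where "0 \<le> \<theta>" "\<theta> < 1"
    "\<And>w e. w \<in> X \<Longrightarrow> (\<And>\<alpha>. \<exists>r\<in>R. (\<lambda>x. shift act \<alpha> w x - r x) \<in> cspan_fun F) \<Longrightarrow> e > 0 \<Longrightarrow>
       \<exists>r\<in>R. N (\<lambda>x. w x - r x) \<le> \<theta> * N w + e"
proof -
  define m where "m = card F"
  obtain t where t: "0 < t" "t < 1" "(1 - t) powr p + real m * t powr p < 1"
    using contraction_weight_exists[OF one_less_p] by blast
  define \<theta> where "\<theta> = ((1 - t) powr p + real m * t powr p) powr (1 / p)"
  have "\<theta> < 1 powr (1 / p)" unfolding \<theta>_def using t(3) p_pos by (intro powr_less_mono2) auto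
  then have \<theta>: "0 \<le> \<theta>" "\<theta> < 1" by (simp_all add: \<theta>_def)
  have "\<exists>r\<in>R. N (\<lambda>x. w x - r x) \<le> \<theta> * N w + e"
    if w: "w \<in> X" and sp: "\<And>\<alpha>. \<exists>r\<in>R. (\<lambda>x. shift act \<alpha> w x - r x) \<in> cspan_fun F" and e: "e > 0" for w e
  proof -
    have dep: "\<exists>c. (\<exists>j\<in>{0..m}. c j \<noteq> 0) \<and>
        (\<lambda>x. \<Sum>j\<in>{0..m}. c j * shift act (vec (int j * L)) w x) \<in> R" for L :: int
    proof (rule nontrivial_lincomb_in_subspace[where w = "\<lambda>j. shift act (vec (int j * L)) w",
          OF R(1) F finite_atLeastAtMost])
      show "card F < card {0..m}" by (simp add: m_def)
      show "\<exists>r\<in>R. (\<lambda>x. shift act (vec (int j * L)) w x - r x) \<in> cspan_fun F" for j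
        by (rule sp)
    qed blast
    show ?thesis
    proof (rule contraction_step[OF w R dep _ _ e])
      show "0 \<le> t" "t \<le> 1" using t by simp_all
    qed (auto simp: \<theta>_def)
  qed
  with \<theta> show thesis by (intro that) blast+
qed

lemma shift_invariant_finite_dim_eq_0:
  assumes F: "finite F" and u: "u \<in> X" and span: "\<And>\<alpha>. shift act \<alpha> u \<in> cspan_fun F"
  shows "u = (\<lambda>x. 0)"
proof -
  have R: "fun_subspace {\<lambda>x. 0}" "shift_invariant act {\<lambda>x. 0}"
    by (simp_all add: fun_subspace_def shift_invariant_def shift_def)
  show ?thesis
  proof (rule uniform_distance_contraction[OF F R])
    fix \<theta> assume \<theta>: "0 \<le> \<theta>" "\<theta> < 1"
      and contr: "\<And>w e. w \<in> X \<Longrightarrow> (\<And>\<alpha>. \<exists>r\<in>{\<lambda>x. 0}. (\<lambda>x. shift act \<alpha> w x - r x) \<in> cspan_fun F) \<Longrightarrow>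
        e > 0 \<Longrightarrow> \<exists>r\<in>{\<lambda>x. 0}. N (\<lambda>x. w x - r x) \<le> \<theta> * N w + e"
    have span0: "\<exists>r\<in>{\<lambda>x. 0}. (\<lambda>x. shift act \<alpha> u x - r x) \<in> cspan_fun F" for \<alpha>
      using span[of \<alpha>] by simp
    have "(1 - \<theta>) * N u \<le> e" if "e > 0" for e
      using contr[OF u span0 that] by (simp add: algebra_simps)
    then have "(1 - \<theta>) * N u \<le> 0" by (rule dense_ge)
    then have "N u = 0" using \<theta> N_nonneg[of u] by (simp add: mult_le_0_iff)
    then show ?thesis by (rule N_eq_0D[OF u])
  qed
qed

lemma shift_invariant_finite_codim_eq:
  assumes F: "finite F" and RX: "R \<subseteq> X" and R: "fun_subspace R" "shift_invariant act R"
    and closed: "\<And>v. v \<in> X \<Longrightarrow> (\<forall>e>0. \<exists>r\<in>R. N (\<lambda>x. r x - v x) < e) \<Longrightarrow> v \<in> R"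
    and codim: "\<And>v. v \<in> X \<Longrightarrow> \<exists>r\<in>R. (\<lambda>x. v x - r x) \<in> cspan_fun F"
    and v: "v \<in> X"
  shows "v \<in> R"
proof (rule uniform_distance_contraction[OF F R])
  fix \<theta> assume \<theta>: "0 \<le> \<theta>" "\<theta> < 1"
    and contr: "\<And>w e. w \<in> X \<Longrightarrow> (\<And>\<alpha>. \<exists>r\<in>R. (\<lambda>x. shift act \<alpha> w x - r x) \<in> cspan_fun F) \<Longrightarrow>
      e > 0 \<Longrightarrow> \<exists>r\<in>R. N (\<lambda>x. w x - r x) \<le> \<theta> * N w + e"
  have "\<exists>r\<in>R. N (\<lambda>x. w x - r x) \<le> \<theta> * N w + e" if "w \<in> X" "e > 0" for w e
    using contr[OF that(1) codim[OF X_shift[OF that(1)]] that(2)] .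
  from subspace_eq_if_distance_contracts[OF RX R(1) closed \<theta>(1,2) this v] show ?thesis .
qed

lemma periodic_fredholm_imp_invertible:
  assumes fr: "fredholm p C" and per: "\<And>\<alpha> u. u \<in> X \<Longrightarrow> shift act \<alpha> (C u) = C (shift act \<alpha> u)"
  shows "invertible_op p C"
proof -
  have C: "bounded_op p C" using fr by (simp add: fredholm_def)
  obtain F1 where F1: "finite F1" "{u \<in> X. C u = (\<lambda>x. 0)} \<subseteq> cspan_fun F1"
    using fr by (auto simp: fredholm_def)
  obtain F2 where F2: "finite F2" "\<And>v. v \<in> X \<Longrightarrow> \<exists>u\<in>X. (\<lambda>x. v x - C u x) \<in> cspan_fun F2"
    using fr by (auto simp: fredholm_def)
  have inj: "u = (\<lambda>x. 0)" if u: "u \<in> X" "C u = (\<lambda>x. 0)" for u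
  proof (rule shift_invariant_finite_dim_eq_0[OF F1(1) u(1)])
    fix \<alpha>
    have "C (shift act \<alpha> u) = (\<lambda>x. 0)" using per[OF u(1), of \<alpha>] u(2) by (simp add: shift_def)
    then show "shift act \<alpha> u \<in> cspan_fun F1" using F1(2) X_shift[OF u(1)] by blast
  qed
  have surj: "\<exists>u\<in>X. C u = v" if v: "v \<in> X" for v
  proof -
    have "v \<in> C ` X"
    proof (rule shift_invariant_finite_codim_eq[OF F2(1) _ _ _ _ _ v])
      show "C ` X \<subseteq> X" using bounded_op_mem[OF C] by blast
      have "(\<lambda>x. C u x + C u' x) \<in> C ` X" if "u \<in> X" "u' \<in> X" for u u'
        by (rule image_eqI[where x = "\<lambda>x. u x + u' x"]) (simp_all add: bounded_op_add[OF C that] X_add[OF that])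
      moreover have "(\<lambda>x. c * C u x) \<in> C ` X" if "u \<in> X" for u c
        by (rule image_eqI[where x = "\<lambda>x. c * u x"]) (simp_all add: bounded_op_scale[OF C that] X_scale[OF that])
      moreover have "(\<lambda>x. 0) \<in> C ` X"
        by (rule image_eqI[where x = "\<lambda>x. 0"]) (simp_all add: bounded_op_zero[OF C])
      ultimately show "fun_subspace (C ` X)" unfolding fun_subspace_def by blast
      show "shift_invariant act (C ` X)"
        unfolding shift_invariant_def using X_shift per by auto
      show "w \<in> C ` X" if "w \<in> X" "\<forall>e>0. \<exists>r\<in>C ` X. N (\<lambda>x. r x - w x) < e" for w
        using fr that by (auto simp: fredholm_def)
      show "\<exists>r\<in>C ` X. (\<lambda>x. w x - r x) \<in> cspan_fun F2" if "w \<in> X" for w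
        using F2(2)[OF that] by auto
    qed
    then show ?thesis by auto
  qed
  show ?thesis by (rule invertible_if_bijective[OF C surj inj])
qed

end

theorem proposition4p1:
  fixes \<rho> :: "'a \<Rightarrow> 'a \<Rightarrow> real"
    and act :: "int ^ 'n \<Rightarrow> 'a \<Rightarrow> 'a"
    and p :: real
    and A :: "('a \<Rightarrow> complex) \<Rightarrow> ('a \<Rightarrow> complex)"
  assumes "periodic_space \<rho> act"
    and "1 < p"
    and "Ap_class p \<rho> A"
    and "\<forall>\<alpha>. \<forall>u \<in> lp_space p. shift act \<alpha> (A u) = A (shift act \<alpha> u)"
  shows "ess_spectrum_op p A = spectrum_op p A"
proof -
  interpret periodic_lp p act
    using assms(1,2) by unfold_locales (auto simp: periodic_space_def)
  have "shift act \<alpha> ((\<lambda>u x. A u x - z * u x) u) = (\<lambda>u x. A u x - z * u x) (shift act \<alpha> u)"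
    if "u \<in> X" for \<alpha> u z
  proof -
    have "shift act \<alpha> (A u) = A (shift act \<alpha> u)" using assms(4) that by blast
    then show ?thesis by (simp add: shift_def fun_eq_iff)
  qed
  then have "fredholm p (\<lambda>u x. A u x - z * u x) \<longleftrightarrow> invertible_op p (\<lambda>u x. A u x - z * u x)" for z
    using invertible_imp_fredholm periodic_fredholm_imp_invertible by blast
  then show ?thesis by (simp add: ess_spectrum_op_def spectrum_op_def)
qed

end
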